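(* Let $E=\mathbb{C}/(\tau_1\mathbb{Z}+\mathbb{Z})$ and $F$ be complex elliptic curves and let $A=E\times F$ with the product polarisation of type $(1,4)$, i.e. the class of $\pi_E^*\mathcal{O}_E(1)\otimes\pi_F^*\mathcal{O}_F(4)$ (degree $1$ on $E$, degree $4$ on $F$), where $\pi_E,\pi_F$ are the projections. Among the symmetric (i.e. $(-1)_A$-invariant) curves in the linear systems of line bundles representing this polarisation, there are exactly four that pass through twelve $2$-torsion points of $A$ with odd multiplicity, and all of them are translates of $C_{E\times F}$ by $2$-torsion points of $E\times\{0\}$.
   Context: Write $F=\mathbb{C}/(\tau_2\mathbb{Z}+4\mathbb{Z})$ so that $A=\mathbb{C}^2/(Z\mathbb{Z}^2+\mathrm{diag}(1,4)\mathbb{Z}^2)$ with $Z=\mathrm{diag}(\tau_1,\tau_2)$. $C_{E\times F}$ denotes the zero locus in $A$ of $\theta_A=\theta\begin{bmatrix}3\omega\\0\end{bmatrix}(\cdot,Z)-\theta\begin{bmatrix}\omega\\0\end{bmatrix}(\cdot,Z)$, $\omega=(0,\tfrac14)$, where $\theta\begin{bmatrix}c_1\\c_2\end{bmatrix}(v,Z)=\sum_{l\in\mathbb{Z}^2}\exp\big(\pi i\,{}^t(l+c_1)Z(l+c_1)+2\pi i\,{}^t(l+c_1)(v+c_2)\big)$. *)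

theory Defs
  imports "HOL-Analysis.Analysis" "HOL-Library.Extended_Nat"
begin

text \<open>Points of C^2 are pairs of complex numbers.  The period matrix is
  Z = diag(tau1, tau2) and the polarisation matrix D = diag(1,4), so
  A = C^2 / (Z Z^2 + D Z^2).\<close>

definition theta_char ::
  "real \<times> real \<Rightarrow> real \<times> real \<Rightarrow> complex \<times> complex \<Rightarrow> complex \<Rightarrow> complex \<Rightarrow> complex" where
  "theta_char c1 c2 v tau1 tau2 =
     (\<Sum>\<^sub>\<infinity>l\<in>(UNIV :: (int \<times> int) set).
        let x1 = complex_of_real (of_int (fst l) + fst c1);
            x2 = complex_of_real (of_int (snd l) + snd c1)
        in exp (pi * \<i> * (x1 ^ 2 * tau1 + x2 ^ 2 * tau2)
                + 2 * pi * \<i> * (x1 * (fst v + complex_of_real (fst c2))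
                                 + x2 * (snd v + complex_of_real (snd c2)))))"

definition vmult :: "(complex \<times> complex \<Rightarrow> complex) \<Rightarrow> complex \<times> complex \<Rightarrow> enat" where
  "vmult f p = Sup {enat k | k. \<exists>C>0. \<forall>\<^sub>F h in nhds 0. norm (f (p + h)) \<le> C * norm h ^ k}"

definition odd_mult :: "enat \<Rightarrow> bool" where
  "odd_mult m \<longleftrightarrow> (\<exists>k. m = enat k \<and> odd k)"

text \<open>General section of the basic line bundle L_0 of type (1,4):
  sum_{j<4} a_j theta[(0,j/4);0](v,Z).\<close>
definition theta_section :: "complex \<Rightarrow> complex \<Rightarrow> (nat \<Rightarrow> complex) \<Rightarrow> complex \<times> complex \<Rightarrow> complex" where
  "theta_section tau1 tau2 a v = (\<Sum>j<4. a j * theta_char (0, real j / 4) (0, 0) v tau1 tau2)"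

text \<open>Divisors (curves) are represented by their multiplicity function on C^2
  (Lambda-periodic).  Every line bundle algebraically equivalent to L_0 is a
  translate t_x^* L_0, so the curves in linear systems representing the
  polarisation are the zero divisors of v -> s(v + x), s a nonzero section of L_0.\<close>
definition sym_curves :: "complex \<Rightarrow> complex \<Rightarrow> (complex \<times> complex \<Rightarrow> enat) set" where
  "sym_curves tau1 tau2 =
     {m. (\<exists>a x. (\<exists>j<4. a j \<noteq> 0) \<and> m = vmult (\<lambda>v. theta_section tau1 tau2 a (v + x)))
         \<and> (\<forall>p. m (- p) = m p)}"

definition two_torsion :: "complex \<Rightarrow> complex \<Rightarrow> (complex \<times> complex) set" where
  "two_torsion tau1 tau2 =
     {(of_nat a1 * tau1 / 2 + of_nat b1 / 2, of_nat a2 * tau2 / 2 + 2 * of_nat b2)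
      | a1 b1 a2 b2 :: nat. a1 < 2 \<and> b1 < 2 \<and> a2 < 2 \<and> b2 < 2}"

definition two_torsion_E :: "complex \<Rightarrow> (complex \<times> complex) set" where
  "two_torsion_E tau1 = {(of_nat a * tau1 / 2 + of_nat b / 2, 0) | a b :: nat. a < 2 \<and> b < 2}"

definition C_EF :: "complex \<Rightarrow> complex \<Rightarrow> complex \<times> complex \<Rightarrow> enat" where
  "C_EF tau1 tau2 = vmult (\<lambda>v. theta_char (0, 3/4) (0, 0) v tau1 tau2 - theta_char (0, 1/4) (0, 0) v tau1 tau2)"

end

theory Submission
  imports Defs "HOL-Complex_Analysis.Complex_Analysis"
begin

text \<open>Each curve in question is the zero divisor of \<open>\<theta>[0](z1 + x1, \<tau>1) G(z2 + x2)\<close>, where \<open>G\<close> is a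
  combination of the four \<open>\<theta>[j/4](-, \<tau>2)\<close>, so its multiplicity at a point is the sum of the
  orders of the two one-variable factors. By the argument principle on a period cell, an entire
  function that is \<open>P\<close>-periodic and acquires a factor \<open>exp (\<alpha> - c w)\<close> under \<open>w \<mapsto> w + \<tau>\<close>, with
  \<open>c P = 2 \<pi> i N\<close>, has exactly \<open>N\<close> zeros modulo \<open>P\<int> + \<tau>\<int>\<close>: a simple one at \<open>(1 + \<tau>1)/2\<close> for
  \<open>\<theta>[0]\<close>, four for \<open>G\<close>. Symmetry of the divisor forces \<open>x1\<close> to be a 2-torsion point; then the first
  factor is odd at exactly one of the four \<open>E\<close>-coordinates of the sixteen 2-torsion points, so
  twelve odd points force \<open>G\<close> to vanish to odd order at all four 2-torsion points of \<open>F\<close>. These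
  exhaust its zeros, which are therefore simple and form the divisor of \<open>\<theta>[3/4] - \<theta>[1/4]\<close>.
  Conversely the four translates of \<open>C\<^sub>E\<^sub>F\<close> by 2-torsion points of \<open>E \<times> {0}\<close> have twelve odd points
  and are pairwise distinct.\<close>

section \<open>Period lattices and their half periods\<close>

definition period_lattice :: "real \<Rightarrow> complex \<Rightarrow> complex set" where
  "period_lattice P \<tau> = {of_int m * of_real P + of_int n * \<tau> |m n :: int. True}"

lemma mem_period_lattice:
  "w \<in> period_lattice P \<tau> \<longleftrightarrow> (\<exists>m n :: int. w = of_int m * of_real P + of_int n * \<tau>)"
  by (auto simp: period_lattice_def)

lemma period_lattice_intI [intro]: "of_int m * of_real P + of_int n * \<tau> \<in> period_lattice P \<tau>"
  by (auto simp: period_lattice_def)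

lemma zero_in_period_lattice [simp]: "0 \<in> period_lattice P \<tau>"
  using period_lattice_intI[of 0 P 0 \<tau>] by simp

lemma period_lattice_add:
  assumes "a \<in> period_lattice P \<tau>" "b \<in> period_lattice P \<tau>"
  shows "a + b \<in> period_lattice P \<tau>"
proof -
  obtain m1 n1 m2 n2 :: int where "a = of_int m1 * of_real P + of_int n1 * \<tau>"
    "b = of_int m2 * of_real P + of_int n2 * \<tau>"
    using assms unfolding mem_period_lattice by blast
  then have "a + b = of_int (m1 + m2) * of_real P + of_int (n1 + n2) * \<tau>"
    by (simp add: algebra_simps)
  then show ?thesis by (metis period_lattice_intI)
qed

lemma period_lattice_uminus_iff [simp]: "- a \<in> period_lattice P \<tau> \<longleftrightarrow> a \<in> period_lattice P \<tau>"
proof -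
  have "- a \<in> period_lattice P \<tau>" if a: "a \<in> period_lattice P \<tau>" for a
  proof -
    obtain m n :: int where "a = of_int m * of_real P + of_int n * \<tau>"
      using a unfolding mem_period_lattice by blast
    then have "- a = of_int (- m) * of_real P + of_int (- n) * \<tau>" by (simp add: algebra_simps)
    then show ?thesis by (metis period_lattice_intI)
  qed
  from this[of a] this[of "- a"] show ?thesis by auto
qed

lemma period_lattice_diff:
  "a \<in> period_lattice P \<tau> \<Longrightarrow> b \<in> period_lattice P \<tau> \<Longrightarrow> a - b \<in> period_lattice P \<tau>"
  using period_lattice_add[of a P \<tau> "- b"] by simp

lemma period_lattice_add_iff:
  "l \<in> period_lattice P \<tau> \<Longrightarrow> z + l \<in> period_lattice P \<tau> \<longleftrightarrow> z \<in> period_lattice P \<tau>"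
  using period_lattice_add period_lattice_diff by fastforce

lemma period_lattice_minus_commute:
  "a - b \<in> period_lattice P \<tau> \<longleftrightarrow> b - a \<in> period_lattice P \<tau>"
  using period_lattice_uminus_iff[of "a - b"] by simp

lemma period_lattice_coords:
  assumes P: "P > 0" and tau: "Im \<tau> > 0"
    and L: "of_real x * of_real P + of_real y * \<tau> \<in> period_lattice P \<tau>"
  shows "x \<in> \<int> \<and> y \<in> \<int>"
proof -
  obtain m n :: int where e: "of_real x * of_real P + of_real y * \<tau> = of_int m * of_real P + of_int n * \<tau>"
    using L unfolding mem_period_lattice by blast
  have "y * Im \<tau> = of_int n * Im \<tau>" using arg_cong[OF e, of Im] by simp
  then have y: "y = of_int n" using tau by simp
  have "x * P + y * Re \<tau> = of_int m * P + of_int n * Re \<tau>" using arg_cong[OF e, of Re] by simp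
  then have "x = of_int m" using y P by simp
  then show ?thesis using y by simp
qed

lemma frac_mult_tau_notin_period_lattice:
  assumes "Im \<tau> > 0" and "y \<notin> \<int>"
  shows "of_real y * \<tau> \<notin> period_lattice 1 \<tau>"
  using period_lattice_coords[of 1 \<tau> 0 y] assms by auto

lemma half_notin_Ints: "(1/2 :: real) \<notin> \<int>"
proof
  assume "(1/2 :: real) \<in> \<int>"
  then obtain m :: int where "(1/2 :: real) = of_int m" by (auto elim: Ints_cases)
  then have "2 * m = 1" by linarith
  then show False by presburger
qed

lemma quarter_notin_Ints: "(1/4 :: real) \<notin> \<int>"
proof
  assume "(1/4 :: real) \<in> \<int>"
  then obtain m :: int where "(1/4 :: real) = of_int m" by (auto elim: Ints_cases)
  then have "4 * m = 1" by linarith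
  then show False by presburger
qed

definition half_periods :: "real \<Rightarrow> complex \<Rightarrow> complex set" where
  "half_periods P \<tau> = {of_nat a * \<tau> / 2 + of_nat b * complex_of_real P / 2 |a b :: nat. a < 2 \<and> b < 2}"

lemma half_periods_eq: "half_periods P \<tau> = {0, of_real P / 2, \<tau> / 2, \<tau> / 2 + of_real P / 2}"
proof -
  define f where "f = (\<lambda>a b :: nat. of_nat a * \<tau> / 2 + of_nat b * complex_of_real P / 2)"
  have "f a b \<in> half_periods P \<tau>" if "a < 2" "b < 2" for a b
    using that unfolding half_periods_def f_def by blast
  moreover have "half_periods P \<tau> \<subseteq> {f 0 0, f 0 1, f 1 0, f 1 1}"
    unfolding half_periods_def f_def by (auto simp: less_2_cases_iff)
  ultimately have "half_periods P \<tau> = {f 0 0, f 0 1, f 1 0, f 1 1}" by auto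
  then show ?thesis by (auto simp: f_def)
qed

lemma finite_half_periods [simp]: "finite (half_periods P \<tau>)"
  unfolding half_periods_eq by simp

lemma card_half_periods:
  assumes "P > 0" and "Im \<tau> > 0"
  shows "card (half_periods P \<tau>) = 4"
  using assms unfolding half_periods_eq by (simp add: complex_eq_iff)

lemma double_half_period_in_lattice:
  assumes "s \<in> half_periods P \<tau>"
  shows "2 * s \<in> period_lattice P \<tau>"
proof -
  obtain a b :: nat where "s = of_nat a * \<tau> / 2 + of_nat b * complex_of_real P / 2"
    using assms unfolding half_periods_def by blast
  then have "2 * s = of_int (int b) * of_real P + of_int (int a) * \<tau>" by (simp add: algebra_simps)
  then show ?thesis by (metis period_lattice_intI)
qed

lemma half_period_add_iff_diff:
  assumes "s \<in> half_periods P \<tau>"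
  shows "w + s \<in> period_lattice P \<tau> \<longleftrightarrow> w - s \<in> period_lattice P \<tau>"
  using period_lattice_add_iff[OF double_half_period_in_lattice[OF assms], of "w - s"]
  by (simp add: algebra_simps)

lemma half_periods_incongruent:
  assumes P: "P > 0" and tau: "Im \<tau> > 0"
    and s: "s \<in> half_periods P \<tau>" "s' \<in> half_periods P \<tau>" and L: "s - s' \<in> period_lattice P \<tau>"
  shows "s = s'"
proof -
  obtain a b a' b' :: nat where ab: "a < 2" "b < 2" "a' < 2" "b' < 2"
    and s1: "s = of_nat a * \<tau> / 2 + of_nat b * complex_of_real P / 2"
    and s2: "s' = of_nat a' * \<tau> / 2 + of_nat b' * complex_of_real P / 2"
    using s unfolding half_periods_def by blast
  have "s - s' = of_real ((real b - real b') / 2) * of_real P + of_real ((real a - real a') / 2) * \<tau>"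
    unfolding s1 s2 by (simp add: field_simps)
  then have ints: "(real b - real b') / 2 \<in> \<int> \<and> (real a - real a') / 2 \<in> \<int>"
    using period_lattice_coords[OF P tau] L by metis
  have "k = k'" if "k < 2" "k' < 2" "(real k - real k') / 2 \<in> \<int>" for k k' :: nat
  proof -
    have "- (1/2 :: real) \<notin> \<int>" using half_notin_Ints Ints_minus by fastforce
    then show ?thesis using that half_notin_Ints by (auto simp: less_2_cases_iff)
  qed
  then have "a = a'" "b = b'" using ints ab by blast+
  then show ?thesis using s1 s2 by simp
qed

lemma exists_congruent_half_period:
  assumes "2 * x \<in> period_lattice P \<tau>"
  shows "\<exists>s\<in>half_periods P \<tau>. x - s \<in> period_lattice P \<tau>"
proof -
  obtain m n :: int where e: "2 * x = of_int m * of_real P + of_int n * \<tau>"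
    using assms unfolding mem_period_lattice by blast
  have parity: "of_int k - (of_nat (nat (k mod 2)) :: complex) = 2 * of_int (k div 2)" for k :: int
  proof -
    have "k - int (nat (k mod 2)) = 2 * (k div 2)" by (simp add: minus_mod_eq_mult_div)
    then show ?thesis by (metis of_int_diff of_int_mult of_int_numeral of_int_of_nat_eq)
  qed
  define a b where "a = nat (n mod 2)" and "b = nat (m mod 2)"
  define s where "s = of_nat a * \<tau> / 2 + of_nat b * complex_of_real P / 2"
  have "a < 2" "b < 2" by (simp_all add: a_def b_def)
  then have "s \<in> half_periods P \<tau>" unfolding half_periods_def s_def by blast
  moreover have "x - s = of_int (m div 2) * of_real P + of_int (n div 2) * \<tau>"
  proof -
    have "x - s = ((of_int m - of_nat b) * of_real P + (of_int n - of_nat a) * \<tau>) / 2"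
      using e unfolding s_def by (simp add: field_simps)
    also have "\<dots> = of_int (m div 2) * of_real P + of_int (n div 2) * \<tau>"
      unfolding a_def b_def parity by (simp add: field_simps)
    finally show ?thesis .
  qed
  ultimately show ?thesis by (metis period_lattice_intI)
qed

lemma unique_congruent_half_period:
  assumes "Im \<tau> > 0" and "2 * y \<in> period_lattice 1 \<tau>"
  shows "\<exists>e0\<in>half_periods 1 \<tau>. \<forall>e\<in>half_periods 1 \<tau>. e - y \<in> period_lattice 1 \<tau> \<longleftrightarrow> e = e0"
proof -
  obtain e0 where e0: "e0 \<in> half_periods 1 \<tau>" "y - e0 \<in> period_lattice 1 \<tau>"
    using exists_congruent_half_period[OF assms(2)] by blast
  have "e - y \<in> period_lattice 1 \<tau> \<longleftrightarrow> e = e0" if e: "e \<in> half_periods 1 \<tau>" for e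
  proof
    assume "e - y \<in> period_lattice 1 \<tau>"
    from period_lattice_add[OF this e0(2)] have "e - e0 \<in> period_lattice 1 \<tau>" by simp
    then show "e = e0" using half_periods_incongruent[of 1 \<tau> e e0] assms e e0(1) by simp
  qed (use e0(2) period_lattice_minus_commute in blast)
  then show ?thesis using e0(1) by blast
qed

section \<open>Zeros of quasi-periodic entire functions\<close>

lemma periodic_add_int_mult:
  fixes c w :: "'a :: ring_1"
  assumes "\<And>w. f (w + c) = f w"
  shows "f (w + of_int k * c) = f w"
proof -
  have nat_mult: "f (w + of_nat n * c) = f w" for n w
  proof (induction n arbitrary: w)
    case (Suc n)
    have "f (w + of_nat (Suc n) * c) = f ((w + of_nat n * c) + c)" by (simp add: algebra_simps)
    then show ?case using assms Suc by simp
  qed simp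
  show ?thesis
  proof (cases "k \<ge> 0")
    case True then show ?thesis using nat_mult[where n = "nat k"] by simp
  next
    case False
    then have "w = (w + of_int k * c) + of_nat (nat (- k)) * c" by simp
    then show ?thesis using nat_mult[where n = "nat (- k)" and w = "w + of_int k * c"] by metis
  qed
qed

lemma quasiperiodic_translate_factor:
  fixes f :: "complex \<Rightarrow> complex"
  assumes per: "\<And>w. f (w + of_real P) = f w"
    and qp: "\<And>w. f (w + \<tau>) = exp (\<alpha> - c * w) * f w"
    and l: "l \<in> period_lattice P \<tau>"
  obtains g where "g holomorphic_on UNIV" "\<And>u. g u \<noteq> 0" "\<And>u. f (u + l) = g u * f u"
proof -
  obtain m n :: int where l: "l = of_int m * of_real P + of_int n * \<tau>"
    using l unfolding mem_period_lattice by blast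
  have "\<exists>g. g holomorphic_on UNIV \<and> (\<forall>u. g u \<noteq> 0) \<and> (\<forall>u. f (u + of_int n * \<tau>) = g u * f u)"
  proof (induction n rule: int_induct[where k = 0])
    case base show ?case by (rule exI[of _ "\<lambda>_. 1"]) simp
  next
    case (step1 i)
    then obtain g where g: "g holomorphic_on UNIV" "\<forall>u. g u \<noteq> 0" "\<forall>u. f (u + of_int i * \<tau>) = g u * f u"
      by blast
    have "f (u + of_int (i + 1) * \<tau>) = exp (\<alpha> - c * (u + of_int i * \<tau>)) * g u * f u" for u
      using qp[of "u + of_int i * \<tau>"] g(3) by (simp add: algebra_simps)
    then show ?case using g
      by (intro exI[of _ "\<lambda>u. exp (\<alpha> - c * (u + of_int i * \<tau>)) * g u"]) (auto intro!: holomorphic_intros)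
  next
    case (step2 i)
    then obtain g where g: "g holomorphic_on UNIV" "\<forall>u. g u \<noteq> 0" "\<forall>u. f (u + of_int i * \<tau>) = g u * f u"
      by blast
    have "f (u + of_int (i - 1) * \<tau>) = g u / exp (\<alpha> - c * (u + of_int (i - 1) * \<tau>)) * f u" for u
    proof -
      have "g u * f u = exp (\<alpha> - c * (u + of_int (i - 1) * \<tau>)) * f (u + of_int (i - 1) * \<tau>)"
        using qp[of "u + of_int (i - 1) * \<tau>"] g(3) by (simp add: algebra_simps)
      then show ?thesis by (simp add: field_simps)
    qed
    then show ?case using g
      by (intro exI[of _ "\<lambda>u. g u / exp (\<alpha> - c * (u + of_int (i - 1) * \<tau>))"]) (auto intro!: holomorphic_intros)
  qed
  then obtain g where "g holomorphic_on UNIV" "\<forall>u. g u \<noteq> 0" "\<forall>u. f (u + of_int n * \<tau>) = g u * f u"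
    by blast
  moreover have "f (u + l) = f (u + of_int n * \<tau>)" for u
    using periodic_add_int_mult[of f "of_real P", OF per, of "u + of_int n * \<tau>" m] l by (simp add: algebra_simps)
  ultimately show ?thesis using that by auto
qed

lemma quasiperiodic_zero_translate_iff:
  fixes f :: "complex \<Rightarrow> complex"
  assumes "\<And>w. f (w + of_real P) = f w" and "\<And>w. f (w + \<tau>) = exp (\<alpha> - c * w) * f w"
    and "l \<in> period_lattice P \<tau>"
  shows "f (w + l) = 0 \<longleftrightarrow> f w = 0"
  by (metis quasiperiodic_translate_factor[OF assms] mult_eq_0_iff)

lemma eventually_nonzero_entire:
  fixes f :: "complex \<Rightarrow> complex"
  assumes hol: "f holomorphic_on UNIV" and nz: "f w0 \<noteq> 0"
  shows "\<forall>\<^sub>F u in at z. f u \<noteq> 0"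
proof (cases "f z = 0")
  case False
  have "isCont f z"
    using hol holomorphic_on_imp_continuous_on continuous_on_eq_continuous_at[OF open_UNIV] by blast
  then show ?thesis using False unfolding isCont_def by (rule tendsto_imp_eventually_ne)
next
  case True
  obtain r where "0 < r" "\<And>u. u \<in> ball z r - {z} \<Longrightarrow> f u \<noteq> 0"
    using isolated_zeros[OF hol open_UNIV connected_UNIV _ True _ nz] by blast
  then show ?thesis unfolding eventually_at by (intro exI[of _ r]) (auto simp: dist_commute)
qed

lemma zorder_entire_pos_iff:
  fixes f :: "complex \<Rightarrow> complex"
  assumes hol: "f holomorphic_on UNIV" and nz: "f w0 \<noteq> 0"
  shows "zorder f z > 0 \<longleftrightarrow> f z = 0"
proof -
  have "\<exists>\<^sub>F u in at z. f u \<noteq> 0"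
    using eventually_nonzero_entire[OF hol nz] by (simp add: eventually_frequently)
  moreover have "f analytic_on {z}" using hol analytic_on_open[of UNIV f] analytic_on_subset by blast
  ultimately show ?thesis using zorder_pos_iff[OF hol open_UNIV] zorder_eq_0I by fastforce
qed

lemma holomorphic_on_translate:
  fixes g :: "complex \<Rightarrow> complex"
  assumes "g holomorphic_on UNIV"
  shows "(\<lambda>u. g (u + w)) holomorphic_on UNIV"
  by (rule holomorphic_on_compose[unfolded o_def, of _ _ g])
     (auto intro: holomorphic_intros holomorphic_on_subset[OF assms])

lemma analytic_on_translate:
  fixes g :: "complex \<Rightarrow> complex"
  assumes "g holomorphic_on UNIV"
  shows "(\<lambda>u. g (u + w)) analytic_on S"
  using holomorphic_on_translate[OF assms] analytic_on_open[of UNIV] analytic_on_subset by blast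

lemma zorder_translate: "zorder (\<lambda>z. f (z + x)) p = zorder f (p + x)"
  using zorder_shift[of "\<lambda>z. f (z + x)" p] zorder_shift[of f "p + x"] by (simp add: add_ac)

lemma quasiperiodic_zorder_translate:
  fixes f :: "complex \<Rightarrow> complex"
  assumes hol: "f holomorphic_on UNIV" and nz: "f w0 \<noteq> 0"
    and per: "\<And>w. f (w + of_real P) = f w"
    and qp: "\<And>w. f (w + \<tau>) = exp (\<alpha> - c * w) * f w"
    and l: "l \<in> period_lattice P \<tau>"
  shows "zorder f (w + l) = zorder f w"
proof -
  obtain g where g: "g holomorphic_on UNIV" "\<And>u. g u \<noteq> 0" "\<And>u. f (u + l) = g u * f u"
    using quasiperiodic_translate_factor[OF per qp l] by blast
  have "zorder f (w + l) = zorder (\<lambda>u. f (u + (w + l))) 0" by (rule zorder_shift)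
  also have "(\<lambda>u. f (u + (w + l))) = (\<lambda>u. g (u + w) * f (u + w))"
    using g(3) by (metis add.assoc)
  also have "zorder (\<lambda>u. g (u + w) * f (u + w)) 0 = zorder (\<lambda>u. g (u + w)) 0 + zorder (\<lambda>u. f (u + w)) 0"
  proof (rule zorder_times_analytic)
    have "\<forall>\<^sub>F u in at 0. f (u + w) \<noteq> 0"
      using eventually_nonzero_entire[OF hol nz, of w] by (simp add: at_to_0'[of w] eventually_filtermap add_ac)
    then show "\<forall>\<^sub>F u in at 0. g (u + w) * f (u + w) \<noteq> 0"
      by (rule eventually_mono) (use g(2) in auto)
  qed (intro analytic_on_translate g(1) hol)+
  also have "zorder (\<lambda>u. g (u + w)) 0 = 0"
    by (rule zorder_eq_0I) (use g analytic_on_translate[OF g(1)] in auto)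
  finally show ?thesis by (simp add: zorder_translate)
qed

lemma entire_zeros_finite_on_compact:
  fixes f :: "complex \<Rightarrow> complex"
  assumes hol: "f holomorphic_on UNIV" and nz: "f w0 \<noteq> 0" and "compact C"
  shows "finite {z\<in>C. f z = 0}"
proof (cases "f constant_on UNIV")
  case True
  then obtain k where "\<And>z. f z = k" by (auto simp: constant_on_def)
  then have "{z\<in>C. f z = 0} = {}" using nz by auto
  then show ?thesis by (metis finite.emptyI)
next
  case False then show ?thesis
    by (intro holomorphic_compact_finite_zeros[OF hol]) (use assms in auto)
qed

lemma argument_principle_rectpath:
  fixes f :: "complex \<Rightarrow> complex"
  assumes hol: "f holomorphic_on UNIV" and nz: "f w0 \<noteq> 0"
    and ab: "Re a \<le> Re b" "Im a \<le> Im b"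
    and bdry: "\<And>w. w \<in> cbox a b - box a b \<Longrightarrow> f w \<noteq> 0"
  defines "Z \<equiv> {z \<in> box a b. f z = 0}"
  shows "finite Z"
    and "contour_integral (rectpath a b) (\<lambda>w. deriv f w / f w) = 2 * pi * \<i> * (\<Sum>z\<in>Z. of_int (zorder f z))"
proof -
  define S where "S = box (a - (1 + \<i>)) (b + (1 + \<i>))"
  define pz where "pz = {w\<in>S. f w = 0 \<or> w \<in> {}}"
  have Ssub: "cbox a b \<subseteq> S" by (auto simp: S_def in_cbox_complex_iff in_box_complex_iff)
  have finpz: "finite pz"
    using entire_zeros_finite_on_compact[OF hol nz compact_cbox, of "a - (1 + \<i>)" "b + (1 + \<i>)"]
      box_subset_cbox by (auto simp: pz_def S_def elim!: finite_subset[rotated])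
  have img: "path_image (rectpath a b) \<subseteq> cbox a b - box a b"
    using path_image_rectpath_cbox_minus_box[OF ab] by simp
  have AP: "contour_integral (rectpath a b) (\<lambda>x. deriv f x * (\<lambda>_. 1) x / f x) = 2 * pi * \<i> *
          (\<Sum>p\<in>pz. winding_number (rectpath a b) p * (\<lambda>_. 1) p * zorder f p)"
    unfolding pz_def
  proof (rule argument_principle[where f=f and S=S and poles="{}" and h="\<lambda>_. 1" and g="rectpath a b"])
    show "open S" "connected S" by (simp_all add: S_def open_box convex_connected)
    show "f holomorphic_on S - {}" using hol by (rule holomorphic_on_subset) auto
    show "path_image (rectpath a b) \<subseteq> S - {w \<in> S. f w = 0 \<or> w \<in> {}}"
      using img bdry Ssub by blast
    show "\<forall>z. z \<notin> S \<longrightarrow> winding_number (rectpath a b) z = 0"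
      using Ssub winding_number_rectpath_outside[OF ab] by blast
    show "finite {w \<in> S. f w = 0 \<or> w \<in> {}}" using finpz by (simp add: pz_def)
  qed simp_all
  have Zpz: "Z \<subseteq> pz" using Ssub box_subset_cbox by (auto simp: Z_def pz_def)
  then show "finite Z" using finpz finite_subset by blast
  have "(\<Sum>p\<in>pz. winding_number (rectpath a b) p * 1 * zorder f p) = (\<Sum>p\<in>Z. of_int (zorder f p))"
  proof (rule sum.mono_neutral_cong_right[OF finpz Zpz])
    show "\<forall>p\<in>pz - Z. winding_number (rectpath a b) p * 1 * of_int (zorder f p) = 0"
      using bdry winding_number_rectpath_outside[OF ab] by (auto simp: pz_def Z_def)
    show "winding_number (rectpath a b) p * 1 * of_int (zorder f p) = of_int (zorder f p)" if "p \<in> Z" for p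
      using that winding_number_rectpath by (simp add: Z_def)
  qed
  then show "contour_integral (rectpath a b) (\<lambda>w. deriv f w / f w) = 2 * pi * \<i> * (\<Sum>z\<in>Z. of_int (zorder f z))"
    using AP by simp
qed

lemma contour_integral_linepath_translate:
  "contour_integral (linepath (p + d) (q + d)) L = contour_integral (linepath p q) (\<lambda>z. L (z + d))"
proof -
  have "linepath (p + d) (q + d) t = linepath p q t + d" for t
    by (simp add: linepath_def algebra_simps scaleR_conv_of_real)
  then show ?thesis by (simp add: contour_integral_integral)
qed

lemma closed_segment_horizontal: "Im p = y \<Longrightarrow> Im q = y \<Longrightarrow> closed_segment p q \<subseteq> {w. Im w = y}"
  using closed_segment_same_Im[of p q] by auto

lemma contour_integral_period_segment_shift_le:
  fixes L :: "complex \<Rightarrow> complex"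
  assumes cont: "continuous_on {w. Im w = Im u} L"
    and per: "\<And>w. L (w + of_real P) = L w"
    and s: "0 \<le> s" "s \<le> P"
  shows "contour_integral (linepath (u + of_real s) (u + of_real s + of_real P)) L
       = contour_integral (linepath u (u + of_real P)) L"
proof -
  have c: "continuous_on (closed_segment p q) L" if "Im p = Im u" "Im q = Im u" for p q
    by (rule continuous_on_subset[OF cont closed_segment_horizontal]) (use that in auto)
  have in_segment_real: "u + of_real t \<in> closed_segment u (u + of_real P)" if "0 \<le> t" "t \<le> P" for u t
  proof (cases "P = 0")
    case False
    with that have "0 \<le> t / P" "t / P \<le> 1" by auto
    moreover have "u + of_real t = (1 - t / P) *\<^sub>R u + (t / P) *\<^sub>R (u + of_real P)"
      using False by (simp add: scaleR_conv_of_real algebra_simps flip: of_real_mult)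
    ultimately show ?thesis unfolding in_segment by blast
  qed (use that in simp)
  have "contour_integral (linepath u (u + of_real P)) L = contour_integral (linepath u (u + of_real s)) L
      + contour_integral (linepath (u + of_real s) (u + of_real P)) L"
    by (rule contour_integral_split_linepath[OF c in_segment_real[OF s]]) auto
  moreover have "contour_integral (linepath (u + of_real s) (u + of_real s + of_real P)) L
       = contour_integral (linepath (u + of_real s) (u + of_real P)) L
       + contour_integral (linepath (u + of_real P) (u + of_real s + of_real P)) L"
    using in_segment_real[of "P - s" "u + of_real s"] s
    by (intro contour_integral_split_linepath[OF c]) (auto simp: algebra_simps)
  moreover have "contour_integral (linepath (u + of_real P) (u + of_real s + of_real P)) L
       = contour_integral (linepath u (u + of_real s)) L"
    using contour_integral_linepath_translate[of u "of_real P" "u + of_real s" L] per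
    by (simp add: algebra_simps)
  ultimately show ?thesis by simp
qed

lemma contour_integral_period_segment_shift:
  fixes L :: "complex \<Rightarrow> complex"
  assumes cont: "continuous_on {w. Im w = Im u} L"
    and per: "\<And>w. L (w + complex_of_real P) = L w" and P: "P > 0"
  shows "contour_integral (linepath (u + of_real s) (u + of_real s + of_real P)) L
       = contour_integral (linepath u (u + of_real P)) L"
proof -
  define k where "k = floor (s / P)"
  define r where "r = s - of_int k * P"
  have "of_int k \<le> s / P" "s / P < of_int k + 1" unfolding k_def by linarith+
  then have r: "0 \<le> r" "r \<le> P" using P unfolding r_def by (auto simp: field_simps)
  define u' where "u' = u + of_int k * of_real P"
  have "contour_integral (linepath (u + of_real s) (u + of_real s + of_real P)) L
       = contour_integral (linepath (u' + of_real r) (u' + of_real r + of_real P)) L"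
    by (simp add: u'_def r_def)
  also have "\<dots> = contour_integral (linepath u' (u' + of_real P)) L"
    by (rule contour_integral_period_segment_shift_le) (use cont r per in \<open>auto simp: u'_def\<close>)
  also have "\<dots> = contour_integral (linepath u (u + of_real P)) (\<lambda>z. L (z + of_int k * of_real P))"
    using contour_integral_linepath_translate[of u "of_int k * of_real P" "u + of_real P" L]
    by (simp add: u'_def algebra_simps)
  also have "\<dots> = contour_integral (linepath u (u + of_real P)) L"
    using periodic_add_int_mult[of L "of_real P", OF per] by simp
  finally show ?thesis .
qed

text \<open>The top edge of a period cell is the bottom edge translated by \<open>\<tau>\<close> and then slid
  horizontally, which the \<open>P\<close>-periodicity of \<open>L\<close> allows.\<close>

lemma contour_integral_period_segment_tau_shift:
  fixes L :: "complex \<Rightarrow> complex"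
  assumes cont: "continuous_on {w. Im w = Im a} L"
    and per: "\<And>w. L (w + complex_of_real P) = L w"
    and qp: "\<And>w. Im w = Im a \<Longrightarrow> L (w + \<tau>) = L w - c"
    and P: "P > 0"
  defines "a' \<equiv> a + \<i> * of_real (Im \<tau>)"
  shows "contour_integral (linepath a' (a' + of_real P)) L
       = contour_integral (linepath a (a + of_real P)) L - c * of_real P"
proof -
  define u where "u = a' - \<tau>"
  have Imu: "Im u = Im a" by (simp add: u_def a'_def)
  have line: "closed_segment u (u + of_real P) \<subseteq> {w. Im w = Im a}"
    using closed_segment_horizontal[of u "Im a" "u + of_real P"] Imu by simp
  have "contour_integral (linepath a' (a' + of_real P)) L
      = contour_integral (linepath u (u + of_real P)) (\<lambda>z. L (z + \<tau>))"
    using contour_integral_linepath_translate[of u \<tau> "u + of_real P" L] by (simp add: u_def add_ac)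
  also have "\<dots> = contour_integral (linepath u (u + of_real P)) (\<lambda>z. L z - c)"
    using line by (intro contour_integral_cong) (auto intro: qp)
  also have "\<dots> = contour_integral (linepath u (u + of_real P)) L - c * of_real P"
    using continuous_on_subset[OF cont line]
    by (subst contour_integral_diff) (auto intro: contour_integrable_continuous_linepath)
  also have "u = a + of_real (Re u - Re a)" using Imu by (simp add: complex_eq_iff)
  then have "contour_integral (linepath u (u + of_real P)) L = contour_integral (linepath a (a + of_real P)) L"
    using contour_integral_period_segment_shift[OF cont per P, of "Re u - Re a"] by metis
  finally show ?thesis .
qed

lemma contour_integral_rectpath_period_cell:
  fixes L :: "complex \<Rightarrow> complex" and U :: "complex set"
  assumes cont: "continuous_on U L"
    and line: "{w. Im w = Im a} \<subseteq> U"
    and img: "path_image (rectpath a b) \<subseteq> U"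
    and per: "\<And>w. L (w + complex_of_real P) = L w"
    and qp: "\<And>w. Im w = Im a \<Longrightarrow> L (w + \<tau>) = L w - c"
    and P: "P > 0"
    and b: "b = a + of_real P + \<i> * of_real (Im \<tau>)"
  shows "contour_integral (rectpath a b) L = c * of_real P"
proof -
  define a2 a4 where "a2 = a + of_real P" and "a4 = a + \<i> * of_real (Im \<tau>)"
  have "Complex (Re b) (Im a) = a2" "Complex (Re a) (Im b) = a4"
    by (simp_all add: a2_def a4_def b complex_eq_iff)
  then have rp: "rectpath a b = linepath a a2 +++ linepath a2 b +++ linepath b a4 +++ linepath a4 a"
    by (simp add: rectpath_def Let_def)
  have "closed_segment a a2 \<subseteq> U" "closed_segment a2 b \<subseteq> U" "closed_segment b a4 \<subseteq> U"
       "closed_segment a4 a \<subseteq> U"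
    using img unfolding rp by (auto simp: path_image_join)
  then have ci: "L contour_integrable_on linepath a a2" "L contour_integrable_on linepath a2 b"
    "L contour_integrable_on linepath b a4" "L contour_integrable_on linepath a4 a"
    by (auto intro!: contour_integrable_continuous_linepath continuous_on_subset[OF cont])
  have "contour_integral (rectpath a b) L = contour_integral (linepath a a2) L
     + contour_integral (linepath a2 b) L - contour_integral (linepath a4 b) L
     - contour_integral (linepath a a4) L"
    unfolding rp using ci contour_integral_reversepath[of "linepath a4 b" L]
      contour_integral_reversepath[of "linepath a a4" L] by (simp add: add_ac)
  moreover have "contour_integral (linepath a2 b) L = contour_integral (linepath a a4) L"
    using contour_integral_linepath_translate[of a "of_real P" a4 L] per by (simp add: a2_def a4_def b algebra_simps)
  moreover have "contour_integral (linepath a4 b) L = contour_integral (linepath a a2) L - c * of_real P"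
    using contour_integral_period_segment_tau_shift[OF continuous_on_subset[OF cont line] per qp P]
    by (simp add: a2_def a4_def b add_ac)
  ultimately show ?thesis by simp
qed

lemma exists_avoiding_finite:
  fixes A :: "real set"
  assumes "finite A" "a < b"
  obtains x where "a < x" "x < b" "x \<notin> A"
proof -
  have "infinite ({a<..<b} - A)" using assms by (intro Diff_infinite_finite) auto
  then obtain x where "x \<in> {a<..<b} - A" using infinite_imp_nonempty by blast
  then show ?thesis using that by auto
qed

lemma period_cell_representative:
  assumes P: "P > 0" and tau: "Im \<tau> > 0"
  obtains w' where "w - w' \<in> period_lattice P \<tau>" "Re w' \<in> {x0..<x0 + P}" "Im w' \<in> {y0..<y0 + Im \<tau>}"
proof -
  define n where "n = floor ((Im w - y0) / Im \<tau>)"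
  define w1 where "w1 = w - of_int n * \<tau>"
  define m where "m = floor ((Re w1 - x0) / P)"
  define w' where "w' = w1 - of_int m * of_real P"
  have "of_int n \<le> (Im w - y0) / Im \<tau>" "(Im w - y0) / Im \<tau> < of_int n + 1" unfolding n_def by linarith+
  then have n: "of_int n * Im \<tau> \<le> Im w - y0" "Im w - y0 < (of_int n + 1) * Im \<tau>"
    using tau by (auto simp: field_simps)
  have "of_int m \<le> (Re w1 - x0) / P" "(Re w1 - x0) / P < of_int m + 1" unfolding m_def by linarith+
  then have m: "of_int m * P \<le> Re w1 - x0" "Re w1 - x0 < (of_int m + 1) * P"
    using P by (auto simp: field_simps)
  have "Im w' = Im w - of_int n * Im \<tau>" "Re w' = Re w1 - of_int m * P" by (simp_all add: w'_def w1_def)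
  then have "Re w' \<in> {x0..<x0 + P}" "Im w' \<in> {y0..<y0 + Im \<tau>}"
    using n m by (simp_all add: algebra_simps)
  moreover have "w - w' = of_int m * of_real P + of_int n * \<tau>" by (simp add: w'_def w1_def)
  ultimately show ?thesis using that by (metis period_lattice_intI)
qed

lemma period_cell_incongruent:
  assumes P: "P > 0" and tau: "Im \<tau> > 0"
    and z: "Re z \<in> {x0<..<x0 + P}" "Im z \<in> {y0<..<y0 + Im \<tau>}"
    and z': "Re z' \<in> {x0<..<x0 + P}" "Im z' \<in> {y0<..<y0 + Im \<tau>}"
    and L: "z - z' \<in> period_lattice P \<tau>"
  shows "z = z'"
proof -
  obtain m n :: int where mn: "z - z' = of_int m * of_real P + of_int n * \<tau>"
    using L unfolding mem_period_lattice by blast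
  have "\<bar>of_int n * Im \<tau>\<bar> < Im \<tau>" using arg_cong[OF mn, of Im] z z' by auto
  then have "\<bar>of_int n\<bar> < (1::real)" using tau by (simp add: abs_mult)
  then have n0: "n = 0" by linarith
  have "\<bar>of_int m * P\<bar> < P" using arg_cong[OF mn, of Re] n0 z z' by auto
  then have "\<bar>of_int m\<bar> < (1::real)" using P by (simp add: abs_mult)
  then have "m = 0" by linarith
  then show "z = z'" using mn n0 by simp
qed

lemma quasiperiodic_log_deriv:
  fixes f :: "complex \<Rightarrow> complex"
  assumes hol: "f holomorphic_on UNIV"
    and per: "\<And>w. f (w + of_real P) = f w"
    and qp: "\<And>w. f (w + \<tau>) = exp (\<alpha> - c * w) * f w"
  shows "deriv f (w + of_real P) / f (w + of_real P) = deriv f w / f w"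
    and "f w \<noteq> 0 \<Longrightarrow> deriv f (w + \<tau>) / f (w + \<tau>) = deriv f w / f w - c"
proof -
  have hf: "(f has_field_derivative deriv f z) (at z)" for z
    using hol by (auto intro: holomorphic_derivI)
  have "((\<lambda>x. f (x + of_real P)) has_field_derivative deriv f (w + of_real P)) (at w)"
    using hf[of "w + of_real P"] DERIV_shift by blast
  then have "deriv f (w + of_real P) = deriv f w" using per hf[of w] DERIV_unique by simp
  then show "deriv f (w + of_real P) / f (w + of_real P) = deriv f w / f w" using per by simp
  have "((\<lambda>x. f (x + \<tau>)) has_field_derivative deriv f (w + \<tau>)) (at w)"
    using hf[of "w + \<tau>"] DERIV_shift by blast
  then have 1: "((\<lambda>x. exp (\<alpha> - c * x) * f x) has_field_derivative deriv f (w + \<tau>)) (at w)"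
    using qp by simp
  have 2: "((\<lambda>x. exp (\<alpha> - c * x) * f x) has_field_derivative
      exp (\<alpha> - c * w) * (- c) * f w + exp (\<alpha> - c * w) * deriv f w) (at w)"
    by (auto intro!: derivative_eq_intros hf)
  have "deriv f (w + \<tau>) = exp (\<alpha> - c * w) * (deriv f w - c * f w)"
    using DERIV_unique[OF 1 2] by (simp add: algebra_simps)
  moreover assume "f w \<noteq> 0"
  ultimately show "deriv f (w + \<tau>) / f (w + \<tau>) = deriv f w / f w - c"
    unfolding qp by (simp add: field_simps)
qed

lemma exists_period_cell_zero_free_boundary:
  fixes f :: "complex \<Rightarrow> complex" and P h :: real
  assumes hol: "f holomorphic_on UNIV" and nz: "f w0 \<noteq> 0" and P: "P > 0" and h: "h > 0"
    and per: "\<And>w. f (w + of_real P) = f w"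
  obtains a where "\<And>w. w \<in> cbox a (a + of_real P + \<i> * of_real h) - box a (a + of_real P + \<i> * of_real h)
      \<Longrightarrow> f w \<noteq> 0"
    "\<And>w. Im w = Im a \<Longrightarrow> f w \<noteq> 0"
proof -
  define K where "K = cbox (Complex (-1) (-1)) (Complex P h)"
  define Zs where "Zs = {z\<in>K. f z = 0}"
  have finZs: "finite Zs"
    unfolding Zs_def K_def by (rule entire_zeros_finite_on_compact[OF hol nz compact_cbox])
  obtain x0 where x0: "-1 < x0" "x0 < 0" "x0 \<notin> Re ` Zs \<union> (\<lambda>z. Re z - P) ` Zs"
    using exists_avoiding_finite[of "Re ` Zs \<union> (\<lambda>z. Re z - P) ` Zs" "-1" 0] finZs by auto
  obtain y0 where y0: "-1 < y0" "y0 < 0" "y0 \<notin> Im ` Zs \<union> (\<lambda>z. Im z - h) ` Zs"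
    using exists_avoiding_finite[of "Im ` Zs \<union> (\<lambda>z. Im z - h) ` Zs" "-1" 0] finZs by auto
  define a where "a = Complex x0 y0"
  define b where "b = a + of_real P + \<i> * of_real h"
  have ab: "Re a = x0" "Im a = y0" "Re b = x0 + P" "Im b = y0 + h" by (simp_all add: a_def b_def)
  have cell: "w \<in> cbox a b \<longleftrightarrow> Re w \<in> {x0..x0 + P} \<and> Im w \<in> {y0..y0 + h}" for w
    by (auto simp: in_cbox_complex_iff ab)
  have bdry: "f w \<noteq> 0" if "w \<in> cbox a b - box a b" for w
  proof
    assume "f w = 0"
    moreover have "w \<in> K" using that x0 y0 h by (auto simp: ab K_def in_cbox_complex_iff)
    ultimately have "w \<in> Zs" by (simp add: Zs_def)
    then have "Re w \<noteq> x0" "Re w - P \<noteq> x0" "Im w \<noteq> y0" "Im w - h \<noteq> y0"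
      using x0(3) y0(3) by (metis UnCI image_eqI)+
    moreover have "Re w = x0 \<or> Re w = x0 + P \<or> Im w = y0 \<or> Im w = y0 + h"
      using that by (auto simp: cell in_box_complex_iff ab)
    ultimately show False by auto
  qed
  have "f w \<noteq> 0" if "Im w = y0" for w
  proof -
    define k where "k = floor ((Re w - x0) / P)"
    have "of_int k \<le> (Re w - x0) / P" "(Re w - x0) / P < of_int k + 1" unfolding k_def by linarith+
    then have "of_int k * P \<le> Re w - x0" "Re w - x0 < of_int k * P + P"
      using P by (simp_all add: field_simps)
    then have "w - of_int k * of_real P \<in> cbox a b - box a b"
      using that h by (simp add: cell in_box_complex_iff ab)
    then have "f (w + of_int (- k) * of_real P) \<noteq> 0" using bdry by simp
    then show ?thesis using periodic_add_int_mult[of f "of_real P", OF per] by metis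
  qed
  with bdry show ?thesis using that[of a] by (simp add: b_def ab)
qed

text \<open>Argument principle on a period cell whose boundary avoids the zeros: the log-derivative
  gains \<open>c\<close> from the bottom edge to the top edge and is periodic along the vertical edges,
  so the zeros in the cell have total order \<open>c P / (2 \<pi> i) = N\<close>.\<close>

lemma quasiperiodic_zero_count:
  fixes f :: "complex \<Rightarrow> complex" and P :: real and \<tau> \<alpha> c :: complex and N :: nat
  assumes hol: "f holomorphic_on UNIV" and P: "P > 0" and tau: "Im \<tau> > 0"
    and per: "\<And>w. f (w + of_real P) = f w"
    and qp: "\<And>w. f (w + \<tau>) = exp (\<alpha> - c * w) * f w"
    and cN: "c * of_real P = 2 * pi * \<i> * of_nat N"
    and nz: "f w0 \<noteq> 0"
  obtains Z where "finite Z" "\<And>z. z \<in> Z \<Longrightarrow> f z = 0"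
    "\<And>w. f w = 0 \<Longrightarrow> \<exists>z\<in>Z. w - z \<in> period_lattice P \<tau>"
    "\<And>z z'. z \<in> Z \<Longrightarrow> z' \<in> Z \<Longrightarrow> z - z' \<in> period_lattice P \<tau> \<Longrightarrow> z = z'"
    "(\<Sum>z\<in>Z. zorder f z) = int N"
proof -
  obtain a where bdry: "\<And>w. w \<in> cbox a (a + of_real P + \<i> * of_real (Im \<tau>))
        - box a (a + of_real P + \<i> * of_real (Im \<tau>)) \<Longrightarrow> f w \<noteq> 0"
    and line: "\<And>w. Im w = Im a \<Longrightarrow> f w \<noteq> 0"
    using exists_period_cell_zero_free_boundary[OF hol nz P tau per] by blast
  define b where "b = a + of_real P + \<i> * of_real (Im \<tau>)"
  have ab: "Re b = Re a + P" "Im b = Im a + Im \<tau>" by (simp_all add: b_def)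
  have abP: "Re a \<le> Re b" "Im a \<le> Im b" using P tau by (simp_all add: ab)
  define L where "L = (\<lambda>w. deriv f w / f w)"
  define U where "U = {w. f w \<noteq> 0}"
  have "open U"
    using holomorphic_on_imp_continuous_on[OF hol] unfolding U_def by (rule open_Collect_neq) simp
  then have contL: "continuous_on U L"
    unfolding L_def U_def
    by (intro holomorphic_on_imp_continuous_on holomorphic_intros holomorphic_deriv[OF hol]
        holomorphic_on_subset[OF hol]) (auto simp: U_def)
  have "contour_integral (rectpath a b) L = c * of_real P"
  proof (rule contour_integral_rectpath_period_cell[OF contL])
    show "{w. Im w = Im a} \<subseteq> U" using line by (auto simp: U_def)
    show "path_image (rectpath a b) \<subseteq> U"
      using bdry path_image_rectpath_cbox_minus_box[OF abP] by (auto simp: U_def b_def)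
    show "L (w + complex_of_real P) = L w" for w
      unfolding L_def by (rule quasiperiodic_log_deriv(1)[OF hol per qp])
    show "L (w + \<tau>) = L w - c" if "Im w = Im a" for w
      unfolding L_def by (rule quasiperiodic_log_deriv(2)[OF hol per qp]) (use line that in auto)
  qed (use P b_def in auto)
  define Z where "Z = {z \<in> box a b. f z = 0}"
  have finZ: "finite Z" and "contour_integral (rectpath a b) L = 2 * pi * \<i> * (\<Sum>z\<in>Z. of_int (zorder f z))"
    using argument_principle_rectpath[OF hol nz abP bdry[folded b_def]] unfolding Z_def L_def by auto
  with \<open>contour_integral (rectpath a b) L = c * of_real P\<close> cN
  have "of_int (\<Sum>z\<in>Z. zorder f z) = (of_int (int N) :: complex)" by simp
  then have sumZ: "(\<Sum>z\<in>Z. zorder f z) = int N" by (simp only: of_int_eq_iff)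
  have cover: "\<exists>z\<in>Z. w - z \<in> period_lattice P \<tau>" if "f w = 0" for w
  proof -
    obtain w' where w': "w - w' \<in> period_lattice P \<tau>"
      "Re w' \<in> {Re a..<Re a + P}" "Im w' \<in> {Im a..<Im a + Im \<tau>}"
      using period_cell_representative[OF P tau] by blast
    have "f w' = 0"
      using quasiperiodic_zero_translate_iff[OF per qp w'(1), of w'] that by simp
    moreover have "w' \<in> cbox a b" using w' by (auto simp: in_cbox_complex_iff ab)
    ultimately have "w' \<in> Z" using bdry by (auto simp: Z_def b_def)
    then show ?thesis using w'(1) by blast
  qed
  have incong: "z = z'" if "z \<in> Z" "z' \<in> Z" "z - z' \<in> period_lattice P \<tau>" for z z'
    using period_cell_incongruent[OF P tau _ _ _ _ that(3), of "Re a" "Im a"] that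
    by (auto simp: Z_def in_box_complex_iff ab)
  show ?thesis using that[OF finZ _ cover incong sumZ] by (auto simp: Z_def)
qed

lemma sum_ge_one_eq_card_subset:
  fixes g :: "'a \<Rightarrow> int"
  assumes Z: "finite Z" and S: "S \<subseteq> Z" and g: "\<And>z. z \<in> Z \<Longrightarrow> g z \<ge> 1"
    and sum: "(\<Sum>z\<in>Z. g z) = int (card S)"
  shows "S = Z" and "\<And>z. z \<in> Z \<Longrightarrow> g z = 1"
proof -
  have "card S \<le> card Z" using card_mono[OF Z S] .
  moreover have "int (card Z) + (\<Sum>z\<in>Z. g z - 1) = (\<Sum>z\<in>Z. g z)"
    by (simp add: sum_subtractf)
  moreover have nonneg: "\<forall>z\<in>Z. 0 \<le> g z - 1" using g by fastforce
  then have "(\<Sum>z\<in>Z. g z - 1) \<ge> 0" by (simp add: sum_nonneg)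
  ultimately have card: "card S = card Z" and rest: "(\<Sum>z\<in>Z. g z - 1) = 0" using sum by linarith+
  show "S = Z" using card_subset_eq[OF Z S card] .
  have "\<forall>z\<in>Z. g z - 1 = 0" using sum_nonneg_eq_0_iff[OF Z, of "\<lambda>z. g z - 1"] nonneg rest by blast
  then show "g z = 1" if "z \<in> Z" for z using that by simp
qed

lemma quasiperiodic_zeros_complete:
  fixes f :: "complex \<Rightarrow> complex" and S :: "complex set"
  assumes hol: "f holomorphic_on UNIV" and P: "P > 0" and tau: "Im \<tau> > 0"
    and per: "\<And>w. f (w + of_real P) = f w"
    and qp: "\<And>w. f (w + \<tau>) = exp (\<alpha> - c * w) * f w"
    and cN: "c * of_real P = 2 * pi * \<i> * of_nat N"
    and nz: "f w0 \<noteq> 0"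
    and S: "card S = N" "\<And>s. s \<in> S \<Longrightarrow> f s = 0"
      "\<And>s s'. s \<in> S \<Longrightarrow> s' \<in> S \<Longrightarrow> s - s' \<in> period_lattice P \<tau> \<Longrightarrow> s = s'"
  shows "f w = 0 \<Longrightarrow> \<exists>s\<in>S. w - s \<in> period_lattice P \<tau>"
    and "s \<in> S \<Longrightarrow> zorder f s = 1"
proof -
  obtain Z where Z: "finite Z" "\<And>z. z \<in> Z \<Longrightarrow> f z = 0"
    "\<And>w. f w = 0 \<Longrightarrow> \<exists>z\<in>Z. w - z \<in> period_lattice P \<tau>"
    "\<And>z z'. z \<in> Z \<Longrightarrow> z' \<in> Z \<Longrightarrow> z - z' \<in> period_lattice P \<tau> \<Longrightarrow> z = z'"
    "(\<Sum>z\<in>Z. zorder f z) = int N"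
    using quasiperiodic_zero_count[OF hol P tau per qp cN nz] by blast
  have "\<forall>s\<in>S. \<exists>z\<in>Z. s - z \<in> period_lattice P \<tau>" using Z(3) S(2) by blast
  then obtain \<phi> where \<phi>: "\<And>s. s \<in> S \<Longrightarrow> \<phi> s \<in> Z \<and> s - \<phi> s \<in> period_lattice P \<tau>"
    by metis
  have "inj_on \<phi> S"
  proof (rule inj_onI)
    fix s s' assume s: "s \<in> S" "s' \<in> S" "\<phi> s = \<phi> s'"
    have "(s - \<phi> s) - (s' - \<phi> s') \<in> period_lattice P \<tau>"
      using \<phi> s(1,2) by (blast intro: period_lattice_diff)
    then show "s = s'" using S(3) s by simp
  qed
  then have "(\<Sum>z\<in>Z. zorder f z) = int (card (\<phi> ` S))" using S(1) Z(5) by (simp add: card_image)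
  moreover have "\<phi> ` S \<subseteq> Z" using \<phi> by blast
  moreover have "zorder f z \<ge> 1" if "z \<in> Z" for z
  proof -
    have "zorder f z > 0" using zorder_entire_pos_iff[OF hol nz, of z] Z(2)[OF that] by blast
    then show ?thesis by simp
  qed
  ultimately have image: "\<phi> ` S = Z" and one: "\<And>z. z \<in> Z \<Longrightarrow> zorder f z = 1"
    using sum_ge_one_eq_card_subset[OF Z(1)] by blast+
  show "\<exists>s\<in>S. w - s \<in> period_lattice P \<tau>" if fw: "f w = 0"
  proof -
    obtain z where z: "z \<in> Z" "w - z \<in> period_lattice P \<tau>" using Z(3)[OF fw] by blast
    then obtain s where s: "s \<in> S" "z = \<phi> s" using image by blast
    have "(w - z) - (s - \<phi> s) \<in> period_lattice P \<tau>" using \<phi>[OF s(1)] z(2) by (blast intro: period_lattice_diff)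
    then have "w - s \<in> period_lattice P \<tau>" using s(2) by simp
    then show ?thesis using s(1) by blast
  qed
  show "zorder f s = 1" if "s \<in> S"
  proof -
    have "zorder f (\<phi> s + (s - \<phi> s)) = zorder f (\<phi> s)"
      using \<phi>[OF that] by (intro quasiperiodic_zorder_translate[OF hol nz per qp]) simp
    then show ?thesis using one \<phi>[OF that] by simp
  qed
qed

lemma quasiperiodic_zorder_eq:
  fixes f :: "complex \<Rightarrow> complex" and S :: "complex set"
  assumes hol: "f holomorphic_on UNIV" and P: "P > 0" and tau: "Im \<tau> > 0"
    and per: "\<And>w. f (w + of_real P) = f w"
    and qp: "\<And>w. f (w + \<tau>) = exp (\<alpha> - c * w) * f w"
    and cN: "c * of_real P = 2 * pi * \<i> * of_nat N"
    and nz: "f w0 \<noteq> 0"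
    and S: "card S = N" "\<And>s. s \<in> S \<Longrightarrow> f s = 0"
      "\<And>s s'. s \<in> S \<Longrightarrow> s' \<in> S \<Longrightarrow> s - s' \<in> period_lattice P \<tau> \<Longrightarrow> s = s'"
  shows "zorder f w = of_bool (\<exists>s\<in>S. w - s \<in> period_lattice P \<tau>)"
proof (cases "\<exists>s\<in>S. w - s \<in> period_lattice P \<tau>")
  case True
  then obtain s where s: "s \<in> S" "w - s \<in> period_lattice P \<tau>" by blast
  then have "zorder f (s + (w - s)) = zorder f s"
    by (intro quasiperiodic_zorder_translate[OF hol nz per qp])
  then show ?thesis using True quasiperiodic_zeros_complete(2)[OF assms s(1)] by simp
next
  case False
  then have "f w \<noteq> 0" using quasiperiodic_zeros_complete(1)[OF assms] by blast
  then have "zorder f w = 0"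
    using zorder_eq_0I analytic_on_open[of UNIV f] hol analytic_on_subset by blast
  then show ?thesis using False by simp
qed

section \<open>Theta functions with rational characteristic in one variable\<close>

definition theta_term :: "real \<Rightarrow> complex \<Rightarrow> complex \<Rightarrow> int \<Rightarrow> complex" where
  "theta_term c \<tau> z n = exp (pi * \<i> * (complex_of_real (of_int n + c))\<^sup>2 * \<tau>
                           + 2 * pi * \<i> * complex_of_real (of_int n + c) * z)"

definition theta :: "real \<Rightarrow> complex \<Rightarrow> complex \<Rightarrow> complex" where
  "theta c \<tau> z = (\<Sum>\<^sub>\<infinity>n. theta_term c \<tau> z n)"

text \<open>Pairing the terms \<open>n\<close> and \<open>-n-1\<close> turns the sum over \<open>\<int>\<close> into an ordinary series, to
  which the Weierstrass M-test and termwise differentiation apply.\<close>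

definition theta_pair :: "real \<Rightarrow> complex \<Rightarrow> complex \<Rightarrow> nat \<Rightarrow> complex" where
  "theta_pair c \<tau> z k = theta_term c \<tau> z (int k) + theta_term c \<tau> z (- int k - 1)"

lemma norm_theta_term:
  "norm (theta_term c \<tau> z n) = exp (- pi * (of_int n + c)\<^sup>2 * Im \<tau> - 2 * pi * (of_int n + c) * Im z)"
proof -
  have "Re (pi * \<i> * (complex_of_real (of_int n + c))\<^sup>2 * \<tau> + 2 * pi * \<i> * complex_of_real (of_int n + c) * z)
      = - pi * (of_int n + c)\<^sup>2 * Im \<tau> - 2 * pi * (of_int n + c) * Im z"
    by (simp add: power2_eq_square algebra_simps)
  then show ?thesis by (simp add: theta_term_def)
qed

lemma neg_quadratic_le:
  fixes b K t :: real
  assumes "b > 0"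
  shows "- pi * b * t\<^sup>2 + K * t \<le> K\<^sup>2 / (4 * pi * b)"
proof -
  have "0 \<le> (K - 2 * pi * b * t)\<^sup>2" by simp
  then have "4 * pi * b * (K * t - pi * b * t\<^sup>2) \<le> K\<^sup>2"
    by (simp add: power2_eq_square algebra_simps)
  then have "K * t - pi * b * t\<^sup>2 \<le> K\<^sup>2 / (4 * pi * b)"
    using assms by (subst pos_le_divide_eq) (auto simp: mult.commute)
  then show ?thesis by simp
qed

lemma norm_theta_term_le:
  assumes tau: "Im \<tau> > 0" and R: "\<bar>Im z\<bar> \<le> R"
  shows "norm (theta_term c \<tau> z n) \<le> exp ((2 * pi * R + 1)\<^sup>2 / (4 * pi * Im \<tau>) + \<bar>c\<bar>) * exp (- \<bar>of_int n\<bar>)"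
proof -
  define x where "x = of_int n + c"
  have "\<bar>2 * pi * x * Im z\<bar> = 2 * pi * \<bar>x\<bar> * \<bar>Im z\<bar>" by (simp add: abs_mult)
  also have "\<dots> \<le> 2 * pi * \<bar>x\<bar> * R" using R by (intro mult_left_mono) auto
  finally have "- (2 * pi * x * Im z) \<le> 2 * pi * \<bar>x\<bar> * R" by linarith
  then have "- pi * x\<^sup>2 * Im \<tau> - 2 * pi * x * Im z \<le> - pi * Im \<tau> * \<bar>x\<bar>\<^sup>2 + (2 * pi * R + 1) * \<bar>x\<bar> - \<bar>x\<bar>"
    by (simp add: algebra_simps)
  also have "\<dots> \<le> (2 * pi * R + 1)\<^sup>2 / (4 * pi * Im \<tau>) - \<bar>x\<bar>"
    using neg_quadratic_le[OF tau, where K = "2 * pi * R + 1" and t = "\<bar>x\<bar>"] by simp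
  also have "\<dots> \<le> (2 * pi * R + 1)\<^sup>2 / (4 * pi * Im \<tau>) + \<bar>c\<bar> - \<bar>of_int n\<bar>"
    unfolding x_def by linarith
  finally show ?thesis unfolding norm_theta_term x_def[symmetric] by (simp add: exp_add[symmetric])
qed

lemma norm_theta_pair_le:
  assumes tau: "Im \<tau> > 0" and R: "\<bar>Im z\<bar> \<le> R"
  shows "norm (theta_pair c \<tau> z k) \<le> 2 * exp ((2 * pi * R + 1)\<^sup>2 / (4 * pi * Im \<tau>) + \<bar>c\<bar>) * exp (- real k)"
proof -
  define B where "B = exp ((2 * pi * R + 1)\<^sup>2 / (4 * pi * Im \<tau>) + \<bar>c\<bar>)"
  have "norm (theta_term c \<tau> z (int k)) \<le> B * exp (- real k)"
    using norm_theta_term_le[OF tau R, of c "int k"] by (simp add: B_def)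
  moreover have "norm (theta_term c \<tau> z (- int k - 1)) \<le> B * exp (- real k)"
  proof -
    have "norm (theta_term c \<tau> z (- int k - 1)) \<le> B * exp (- \<bar>real_of_int (- int k - 1)\<bar>)"
      using norm_theta_term_le[OF tau R, of c "- int k - 1"] by (simp add: B_def)
    also have "\<dots> \<le> B * exp (- real k)" by (simp add: B_def)
    finally show ?thesis .
  qed
  moreover have "norm (theta_pair c \<tau> z k)
      \<le> norm (theta_term c \<tau> z (int k)) + norm (theta_term c \<tau> z (- int k - 1))"
    unfolding theta_pair_def by (rule norm_triangle_ineq)
  ultimately show ?thesis by (simp add: B_def)
qed

lemma summable_exp_neg_nat: "summable (\<lambda>k::nat. exp (- real k))"
proof -
  have "(\<lambda>k::nat. exp (- real k)) = (\<lambda>k. (exp (-1)) ^ k)"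
    by (simp add: exp_of_nat_mult[symmetric])
  then show ?thesis by (simp add: summable_geometric)
qed

lemma int_UNIV_eq_nat_union_neg: "(UNIV :: int set) = range int \<union> range (\<lambda>k. - int k - 1)"
proof -
  have "n \<in> range int \<union> range (\<lambda>k. - int k - 1)" for n :: int
  proof (cases "n \<ge> 0")
    case True then have "n = int (nat n)" by simp
    then show ?thesis by blast
  next
    case False then have "n = - int (nat (- n - 1)) - 1" by simp
    then show ?thesis by blast
  qed
  then show ?thesis by blast
qed

lemma theta_term_abs_summable:
  assumes "Im \<tau> > 0"
  shows "(\<lambda>n. norm (theta_term c \<tau> z n)) summable_on UNIV"
proof -
  define B where "B = exp ((2 * pi * \<bar>Im z\<bar> + 1)\<^sup>2 / (4 * pi * Im \<tau>) + \<bar>c\<bar>)"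
  have nat: "(\<lambda>k::nat. exp (- real k)) summable_on UNIV"
    using summable_exp_neg_nat by (intro norm_summable_imp_summable_on) simp
  have "(\<lambda>n::int. exp (- \<bar>real_of_int n\<bar>)) summable_on range int"
    using summable_on_reindex[of int UNIV "\<lambda>n::int. exp (- \<bar>real_of_int n\<bar>)"] nat by (simp add: o_def)
  moreover have "(\<lambda>n::int. exp (- \<bar>real_of_int n\<bar>)) summable_on range (\<lambda>k. - int k - 1)"
  proof -
    have "(\<lambda>k::nat. exp (- 1 - real k)) = (\<lambda>k. exp (-1) * exp (- real k))"
      by (simp add: mult_exp_exp)
    then have "(\<lambda>k::nat. exp (- 1 - real k)) summable_on UNIV"
      by (simp only:) (rule summable_on_cmult_right[OF nat])
    then show ?thesis
      using summable_on_reindex[of "\<lambda>k. - int k - 1" UNIV "\<lambda>n::int. exp (- \<bar>real_of_int n\<bar>)"]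
      by (simp add: o_def inj_on_def)
  qed
  ultimately have "(\<lambda>n::int. exp (- \<bar>real_of_int n\<bar>)) summable_on UNIV"
    by (subst int_UNIV_eq_nat_union_neg) (rule summable_on_union)
  then have "(\<lambda>n::int. B * exp (- \<bar>of_int n\<bar>)) summable_on UNIV"
    by (rule summable_on_cmult_right)
  moreover have "norm (theta_term c \<tau> z n) \<le> B * exp (- \<bar>of_int n\<bar>)" for n
    using norm_theta_term_le[OF assms, of z "\<bar>Im z\<bar>" c n] by (simp add: B_def)
  ultimately show ?thesis by (rule summable_on_comparison_test) simp_all
qed

lemma theta_term_summable: "Im \<tau> > 0 \<Longrightarrow> theta_term c \<tau> z summable_on UNIV"
  using theta_term_abs_summable abs_summable_summable by blast

lemma theta_pair_sums:
  assumes "Im \<tau> > 0"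
  shows "theta_pair c \<tau> z sums theta c \<tau> z"
proof -
  have disj: "range int \<inter> range (\<lambda>k. - int k - 1) = {}" by auto
  have s1: "theta_term c \<tau> z summable_on range int"
    and s2: "theta_term c \<tau> z summable_on range (\<lambda>k. - int k - 1)"
    using theta_term_summable[OF assms] summable_on_subset_banach by blast+
  have i2: "inj (\<lambda>k::nat. - int k - 1)" by (rule injI) simp
  have "((\<lambda>k. theta_term c \<tau> z (int k)) has_sum infsum (theta_term c \<tau> z) (range int)) UNIV"
    using has_sum_reindex[of int UNIV "theta_term c \<tau> z"] has_sum_infsum[OF s1] by (simp add: o_def)
  moreover have "((\<lambda>k. theta_term c \<tau> z (- int k - 1))
      has_sum infsum (theta_term c \<tau> z) (range (\<lambda>k. - int k - 1))) UNIV"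
    using has_sum_reindex[OF i2, of "theta_term c \<tau> z"] has_sum_infsum[OF s2] by (simp add: o_def)
  ultimately have "theta_pair c \<tau> z sums
      (infsum (theta_term c \<tau> z) (range int) + infsum (theta_term c \<tau> z) (range (\<lambda>k. - int k - 1)))"
    unfolding theta_pair_def by (intro sums_add has_sum_imp_sums)
  also have "infsum (theta_term c \<tau> z) (range int) + infsum (theta_term c \<tau> z) (range (\<lambda>k. - int k - 1))
      = theta c \<tau> z"
    unfolding theta_def
    by (subst int_UNIV_eq_nat_union_neg, rule infsum_Un_disjoint[symmetric, OF s1 s2 disj])
  finally show ?thesis .
qed

lemma theta_term_has_field_derivative:
  "((\<lambda>z. theta_term c \<tau> z n) has_field_derivative
      theta_term c \<tau> z n * (2 * pi * \<i> * complex_of_real (of_int n + c))) (at z)"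
  unfolding theta_term_def by (auto intro!: derivative_eq_intros simp: algebra_simps)

lemma holomorphic_theta:
  assumes tau: "Im \<tau> > 0"
  shows "theta c \<tau> holomorphic_on UNIV"
proof -
  define f' where "f' = (\<lambda>k z. theta_term c \<tau> z (int k) * (2 * pi * \<i> * complex_of_real (of_int (int k) + c))
     + theta_term c \<tau> z (- int k - 1) * (2 * pi * \<i> * complex_of_real (of_int (- int k - 1) + c)))"
  have deriv: "((\<lambda>z. theta_pair c \<tau> z k) has_field_derivative f' k z) (at z)" for k z
    unfolding theta_pair_def f'_def by (intro derivative_intros theta_term_has_field_derivative)
  have bound: "\<exists>d h. 0 < d \<and> summable h \<and>
      (\<forall>\<^sub>F k in sequentially. \<forall>y\<in>ball x d \<inter> UNIV. norm (theta_pair c \<tau> y k) \<le> h k)" for x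
  proof -
    define B where "B = 2 * exp ((2 * pi * (\<bar>Im x\<bar> + 1) + 1)\<^sup>2 / (4 * pi * Im \<tau>) + \<bar>c\<bar>)"
    have "norm (theta_pair c \<tau> y k) \<le> B * exp (- real k)" if "y \<in> ball x 1" for y k
    proof -
      have "\<bar>Im y - Im x\<bar> \<le> norm (y - x)" using abs_Im_le_cmod[of "y - x"] by simp
      also have "\<dots> < 1" using that by (simp add: dist_norm norm_minus_commute)
      finally have "\<bar>Im y\<bar> \<le> \<bar>Im x\<bar> + 1" by linarith
      then show ?thesis unfolding B_def by (rule norm_theta_pair_le[OF tau])
    qed
    moreover have "summable (\<lambda>k. B * exp (- real k))"
      using summable_exp_neg_nat by (rule summable_mult)
    ultimately show ?thesis by (intro exI[of _ 1] exI[of _ "\<lambda>k. B * exp (- real k)"]) auto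
  qed
  obtain g g' where g: "\<forall>x\<in>UNIV. ((\<lambda>k. theta_pair c \<tau> x k) sums g x) \<and> ((\<lambda>k. f' k x) sums g' x)
      \<and> (g has_field_derivative g' x) (at x)"
    using series_and_derivative_comparison_local[where f = "\<lambda>k z. theta_pair c \<tau> z k" and f' = f',
        OF open_UNIV deriv bound] by blast
  have "g = theta c \<tau>"
  proof
    fix x
    have "theta_pair c \<tau> x sums g x" using g by blast
    then show "g x = theta c \<tau> x" using theta_pair_sums[OF tau] by (rule sums_unique2)
  qed
  then show ?thesis using g unfolding holomorphic_on_def field_differentiable_def
    by (metis UNIV_I has_field_derivative_at_within)
qed

lemma exp_two_pi_i_int [simp]: "exp (2 * complex_of_real pi * \<i> * of_int n) = 1"
  using exp_integer_2pi[of "of_int n"] by (simp add: mult_ac)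

lemma infsum_int_shift: "(\<Sum>\<^sub>\<infinity>n::int. f (n + k)) = (\<Sum>\<^sub>\<infinity>n. f n)"
  by (rule infsum_reindex_bij_betw) (rule bij_betwI[of _ _ _ "\<lambda>n. n - k"], auto)

lemma theta_add_1: "theta c \<tau> (z + 1) = exp (2 * pi * \<i> * of_real c) * theta c \<tau> z"
proof -
  have "theta_term c \<tau> (z + 1) n
      = exp (2 * pi * \<i> * of_int n) * (exp (2 * pi * \<i> * of_real c) * theta_term c \<tau> z n)" for n
    unfolding theta_term_def exp_add[symmetric] by (rule arg_cong[where f = exp]) (simp add: algebra_simps)
  then have "theta_term c \<tau> (z + 1) = (\<lambda>n. exp (2 * pi * \<i> * of_real c) * theta_term c \<tau> z n)"
    by (simp add: fun_eq_iff)
  then show ?thesis unfolding theta_def by (simp add: infsum_cmult_right')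
qed

lemma theta_add_tau: "theta c \<tau> (z + \<tau>) = exp (- pi * \<i> * \<tau> - 2 * pi * \<i> * z) * theta c \<tau> z"
proof -
  have "theta_term c \<tau> (z + \<tau>) = (\<lambda>n. exp (- pi * \<i> * \<tau> - 2 * pi * \<i> * z) * theta_term c \<tau> z (n + 1))"
    unfolding theta_term_def exp_add[symmetric]
    by (rule ext, rule arg_cong[where f = exp]) (simp add: algebra_simps power2_eq_square)
  then show ?thesis
    unfolding theta_def by (simp add: infsum_cmult_right' infsum_int_shift[of "theta_term c \<tau> z"])
qed

lemma theta_minus: "theta c \<tau> (- z) = theta (- c) \<tau> z"
proof -
  have "theta_term c \<tau> (- z) = (\<lambda>n. theta_term (- c) \<tau> z (- n))"
    unfolding theta_term_def by (rule ext, rule arg_cong[where f = exp]) (simp add: algebra_simps power2_eq_square)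
  then show ?thesis
    unfolding theta_def using infsum_reindex_bij_betw[OF bij_uminus, of "theta_term (- c) \<tau> z"] by simp
qed

lemma theta_char_add_1: "theta (c + 1) \<tau> z = theta c \<tau> z"
proof -
  have "theta_term (c + 1) \<tau> z = (\<lambda>n. theta_term c \<tau> z (n + 1))"
    unfolding theta_term_def by (rule ext, rule arg_cong[where f = exp]) (simp add: algebra_simps)
  then show ?thesis unfolding theta_def by (simp add: infsum_int_shift[of "theta_term c \<tau> z"])
qed

lemma theta_quarter_add_4: "theta (real j / 4) \<tau> (w + 4) = theta (real j / 4) \<tau> w"
proof -
  define e where "e = exp (2 * pi * \<i> * complex_of_real (real j / 4))"
  have "w + 4 = (((w + 1) + 1) + 1) + 1" by simp
  then have "theta (real j / 4) \<tau> (w + 4) = e ^ 4 * theta (real j / 4) \<tau> w"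
    by (simp only: theta_add_1 e_def[symmetric]) (simp add: power4_eq_xxxx mult_ac)
  moreover have "e ^ 4 = exp (of_nat 4 * (2 * pi * \<i> * complex_of_real (real j / 4)))"
    unfolding e_def by (rule exp_of_nat_mult[symmetric])
  moreover have "of_nat 4 * (2 * pi * \<i> * complex_of_real (real j / 4)) = 2 * complex_of_real pi * \<i> * of_int (int j)"
    by simp
  ultimately show ?thesis by (simp only: exp_two_pi_i_int) simp
qed
lemma contour_integral_exp_linepath:
  fixes k P :: real
  assumes "k * P \<in> \<int>"
  shows "contour_integral (linepath 0 (of_real P)) (\<lambda>z. exp (2 * pi * \<i> * of_real k * z))
       = (if k = 0 then of_real P else 0)"
proof (cases "k = 0")
  case False
  define F where "F = (\<lambda>z. exp (2 * pi * \<i> * of_real k * z) / (2 * pi * \<i> * of_real k))"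
  have d: "(F has_field_derivative exp (2 * pi * \<i> * of_real k * z)) (at z within UNIV)" for z
    unfolding F_def using False by (auto intro!: derivative_eq_intros)
  have "((\<lambda>z. exp (2 * pi * \<i> * of_real k * z)) has_contour_integral
      (F (pathfinish (linepath 0 (of_real P))) - F (pathstart (linepath 0 (of_real P)))))
      (linepath 0 (of_real P))"
    by (rule contour_integral_primitive[OF d]) auto
  moreover have "F (of_real P) - F 0 = 0"
  proof -
    obtain m where m: "k * P = of_int m" using assms Ints_cases by blast
    have "exp (2 * pi * \<i> * of_real k * of_real P) = exp (2 * pi * \<i> * of_int m)"
      by (rule arg_cong[where f = exp]) (metis m mult.assoc of_real_mult of_real_of_int_eq)
    then show ?thesis by (simp add: F_def)
  qed
  ultimately show ?thesis using False by (simp add: contour_integral_unique)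
qed simp

lemma contour_integral_theta_term_exp:
  fixes P :: nat and d :: real
  assumes "(c - d) * real P \<in> \<int>"
  shows "contour_integral (linepath 0 (of_nat P)) (\<lambda>z. theta_term c \<tau> z n * exp (- 2 * pi * \<i> * of_real d * z))
     = (if of_int n + c = d then of_nat P * exp (pi * \<i> * (of_real d)\<^sup>2 * \<tau>) else 0)"
proof -
  define k where "k = of_int n + c - d"
  have e: "theta_term c \<tau> z n * exp (- 2 * pi * \<i> * of_real d * z)
      = exp (pi * \<i> * (complex_of_real (of_int n + c))\<^sup>2 * \<tau>) * exp (2 * pi * \<i> * of_real k * z)" for z
    unfolding theta_term_def exp_add[symmetric] k_def by (rule arg_cong[where f = exp]) (simp add: algebra_simps)
  have "k * real P = of_int (n * int P) + (c - d) * real P" by (simp add: k_def algebra_simps)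
  then have kP: "k * real P \<in> \<int>" using assms by (metis Ints_add Ints_of_int)
  have "contour_integral (linepath 0 (of_nat P)) (\<lambda>z. theta_term c \<tau> z n * exp (- 2 * pi * \<i> * of_real d * z))
     = exp (pi * \<i> * (complex_of_real (of_int n + c))\<^sup>2 * \<tau>)
       * contour_integral (linepath 0 (of_nat P)) (\<lambda>z. exp (2 * pi * \<i> * of_real k * z))"
    unfolding e
    by (rule contour_integral_lmul) (intro contour_integrable_continuous_linepath continuous_intros)
  also have "contour_integral (linepath 0 (of_nat P)) (\<lambda>z. exp (2 * pi * \<i> * of_real k * z))
      = (if k = 0 then of_nat P else 0)"
    using contour_integral_exp_linepath[OF kP] by simp
  finally have "contour_integral (linepath 0 (of_nat P)) (\<lambda>z. theta_term c \<tau> z n * exp (- 2 * pi * \<i> * of_real d * z))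
    = exp (pi * \<i> * (complex_of_real (of_int n + c))\<^sup>2 * \<tau>) * (if k = 0 then of_nat P else 0)" .
  moreover have "k = 0 \<longleftrightarrow> of_int n + c = d" by (auto simp: k_def)
  ultimately show ?thesis by (cases "of_int n + c = d") auto
qed

lemma contour_integral_theta_exp_tendsto:
  fixes P :: nat and c d :: real and \<tau> :: complex
  assumes tau: "Im \<tau> > 0"
  defines "\<gamma> \<equiv> linepath 0 (of_nat P)" and "E \<equiv> \<lambda>z. exp (- 2 * pi * \<i> * of_real d * z)"
  shows "(\<lambda>M. \<Sum>k<M. contour_integral \<gamma> (\<lambda>z. theta_pair c \<tau> z k * E z))
           \<longlonglongrightarrow> contour_integral \<gamma> (\<lambda>z. theta c \<tau> z * E z)"
proof -
  define F where "F = (\<lambda>k z. theta_pair c \<tau> z k * E z)"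
  define B where "B = 2 * exp (1 / (4 * pi * Im \<tau>) + \<bar>c\<bar>)"
  have bnd: "norm (F k z) \<le> B * exp (- real k)" if "z \<in> path_image \<gamma>" for k z
  proof -
    have "Im z = 0"
      using that closed_segment_horizontal[of 0 0 "complex_of_nat P"] by (auto simp: \<gamma>_def)
    then have "norm (E z) = 1" and "norm (theta_pair c \<tau> z k) \<le> B * exp (- real k)"
      using norm_theta_pair_le[OF tau, of z 0 c k] by (simp_all add: E_def norm_exp B_def)
    then show ?thesis by (simp add: F_def norm_mult)
  qed
  have "uniform_limit (path_image \<gamma>) (\<lambda>M z. \<Sum>k<M. F k z) (\<lambda>z. \<Sum>k. F k z) sequentially"
    by (rule Weierstrass_m_test[OF bnd summable_mult[OF summable_exp_neg_nat]])
  moreover have "(\<lambda>z. \<Sum>k. F k z) = (\<lambda>z. theta c \<tau> z * E z)"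
    using theta_pair_sums[OF tau] by (auto simp: F_def sums_iff suminf_mult2[symmetric] fun_eq_iff)
  moreover have cF: "F k contour_integrable_on \<gamma>" for k
    unfolding F_def E_def \<gamma>_def theta_pair_def theta_term_def
    by (intro contour_integrable_continuous_linepath continuous_intros)
  ultimately have "(\<lambda>M. contour_integral \<gamma> (\<lambda>z. \<Sum>k<M. F k z)) \<longlonglongrightarrow> contour_integral \<gamma> (\<lambda>z. theta c \<tau> z * E z)"
    using contour_integral_uniform_limit[of "\<lambda>M z. \<Sum>k<M. F k z" \<gamma> sequentially "\<lambda>z. theta c \<tau> z * E z"]
    by (auto simp: \<gamma>_def intro!: always_eventually contour_integrable_sum cF[unfolded \<gamma>_def])
  then show ?thesis
    unfolding F_def using cF[unfolded F_def] by (subst (asm) contour_integral_sum) auto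
qed

lemma contour_integral_theta_exp_pairs:
  fixes P :: nat and c d :: real and \<tau> :: complex
  assumes "(c - d) * real P \<in> \<int>"
  defines "J \<equiv> \<lambda>n. if of_int n + c = d then of_nat P * exp (pi * \<i> * (of_real d)\<^sup>2 * \<tau>) else 0"
  shows "contour_integral (linepath 0 (of_nat P)) (\<lambda>z. theta_pair c \<tau> z k * exp (- 2 * pi * \<i> * of_real d * z))
       = J (int k) + J (- int k - 1)"
proof -
  have ci: "(\<lambda>z. theta_term c \<tau> z n * exp (- 2 * pi * \<i> * of_real d * z)) contour_integrable_on
      linepath 0 (of_nat P)" for n
    unfolding theta_term_def by (intro contour_integrable_continuous_linepath continuous_intros)
  show ?thesis
    unfolding theta_pair_def distrib_right contour_integral_add[OF ci ci]
      contour_integral_theta_term_exp[OF assms(1)] J_def ..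
qed

text \<open>Only the term of index \<open>d - c\<close> survives integration against \<open>exp (-2 \<pi> i d z)\<close>.\<close>

lemma contour_integral_theta_exp_same_char:
  fixes P :: nat
  assumes "Im \<tau> > 0"
  shows "contour_integral (linepath 0 (of_nat P)) (\<lambda>z. theta c \<tau> z * exp (- 2 * pi * \<i> * of_real c * z))
       = of_nat P * exp (pi * \<i> * (of_real c)\<^sup>2 * \<tau>)"
proof -
  have "(\<lambda>M. \<Sum>k<M. contour_integral (linepath 0 (of_nat P)) (\<lambda>z. theta_pair c \<tau> z k * exp (- 2 * pi * \<i> * of_real c * z)))
      = (\<lambda>M. \<Sum>k<M. if k = 0 then of_nat P * exp (pi * \<i> * (of_real c)\<^sup>2 * \<tau>) else 0)"
  proof -
    have "contour_integral (linepath 0 (of_nat P)) (\<lambda>z. theta_pair c \<tau> z k * exp (- 2 * pi * \<i> * of_real c * z))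
        = (if k = 0 then of_nat P * exp (pi * \<i> * (of_real c)\<^sup>2 * \<tau>) else 0)" for k
      using contour_integral_theta_exp_pairs[of c c P \<tau> k] by simp
    then show ?thesis by simp
  qed
  moreover have "(\<lambda>M. \<Sum>k<M. if k = 0 then of_nat P * exp (pi * \<i> * (of_real c)\<^sup>2 * \<tau>) else 0)
      \<longlonglongrightarrow> of_nat P * exp (pi * \<i> * (of_real c)\<^sup>2 * \<tau>)"
    by (rule tendsto_eventually, rule eventually_mono[OF eventually_ge_at_top[of "1::nat"]])
       (simp add: sum.delta)
  ultimately show ?thesis
    using contour_integral_theta_exp_tendsto[OF assms, of P c c] by (auto dest: LIMSEQ_unique)
qed

lemma contour_integral_theta_exp_other_char:
  fixes P :: nat
  assumes "Im \<tau> > 0" and "(c - d) * real P \<in> \<int>" and "d - c \<notin> \<int>"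
  shows "contour_integral (linepath 0 (of_nat P)) (\<lambda>z. theta c \<tau> z * exp (- 2 * pi * \<i> * of_real d * z)) = 0"
proof -
  have no_index: "of_int n + c \<noteq> d" for n
    using assms(3) by (metis Ints_of_int add_diff_cancel_right')
  have "contour_integral (linepath 0 (of_nat P)) (\<lambda>z. theta_pair c \<tau> z k * exp (- 2 * pi * \<i> * of_real d * z))
      = 0" for k
    using contour_integral_theta_exp_pairs[OF assms(2), of \<tau> k] no_index[of "int k"] no_index[of "- int k - 1"]
    by simp
  then have "(\<lambda>M. \<Sum>k<M. contour_integral (linepath 0 (of_nat P)) (\<lambda>z. theta_pair c \<tau> z k * exp (- 2 * pi * \<i> * of_real d * z)))
      = (\<lambda>M. 0)"
    by simp
  then show ?thesis
    using contour_integral_theta_exp_tendsto[OF assms(1), of P c d] by (auto dest: LIMSEQ_unique)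
qed

lemma theta_not_identically_zero:
  assumes "Im \<tau> > 0"
  shows "\<exists>z. theta 0 \<tau> z \<noteq> 0"
proof (rule ccontr)
  assume "\<not> (\<exists>z. theta 0 \<tau> z \<noteq> 0)"
  then show False using contour_integral_theta_exp_same_char[OF assms, of 1 0] by simp
qed

lemma theta_quarter_diff_not_identically_zero:
  assumes tau: "Im \<tau> > 0"
  shows "\<exists>z. theta (3/4) \<tau> z - theta (1/4) \<tau> z \<noteq> 0"
proof (rule ccontr)
  assume "\<not> (\<exists>z. theta (3/4) \<tau> z - theta (1/4) \<tau> z \<noteq> 0)"
  then have "theta (3/4) \<tau> = theta (1/4) \<tau>" by auto
  moreover have "1/4 - 3/4 \<notin> (\<int> :: real set)"
    using half_notin_Ints Ints_minus[of "1/2 :: real"] by force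
  ultimately show False
    using contour_integral_theta_exp_same_char[OF tau, of 4 "1/4"]
      contour_integral_theta_exp_other_char[OF tau, of "3/4" "1/4" 4] by simp
qed

section \<open>Orders of vanishing of products\<close>

lemma vmult_translate: "vmult (\<lambda>v. F (v + x)) p = vmult F (p + x)"
  unfolding vmult_def by (simp add: add_ac)

lemma vmult_zero_fun: "vmult (\<lambda>v. 0) p = \<infinity>"
proof -
  have "\<exists>C>0. \<forall>\<^sub>F h in nhds 0. norm (0::complex) \<le> C * norm (h::complex \<times> complex) ^ k" for k
    by (rule exI[of _ "1::real"]) simp
  then have "{enat k |k. \<exists>C>0. \<forall>\<^sub>F h in nhds 0. norm (0::complex) \<le> C * norm (h::complex \<times> complex) ^ k}
      = range enat"
    by blast
  moreover have "infinite (range enat)" by (rule range_inj_infinite) (simp add: inj_on_def)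
  ultimately show ?thesis unfolding vmult_def by (simp add: Sup_enat_def)
qed

lemma vmult_eqI:
  assumes "\<exists>C>0. \<forall>\<^sub>F h in nhds 0. norm (F (p + h)) \<le> C * norm h ^ K"
    and "\<And>k C. C > 0 \<Longrightarrow> \<forall>\<^sub>F h in nhds 0. norm (F (p + h)) \<le> C * norm h ^ k \<Longrightarrow> k \<le> K"
  shows "vmult F p = enat K"
  unfolding vmult_def
proof (rule antisym)
  show "Sup {enat k |k. \<exists>C>0. \<forall>\<^sub>F h in nhds 0. norm (F (p + h)) \<le> C * norm h ^ k} \<le> enat K"
    using assms(2) by (auto intro!: Sup_least)
  show "enat K \<le> Sup {enat k |k. \<exists>C>0. \<forall>\<^sub>F h in nhds 0. norm (F (p + h)) \<le> C * norm h ^ k}"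
    using assms(1) by (auto intro!: Sup_upper)
qed

lemma zorder_local_bounds:
  fixes f :: "complex \<Rightarrow> complex"
  assumes hol: "f holomorphic_on UNIV" and nz: "f a \<noteq> 0"
  obtains r m M where "r > 0" "m > 0"
    "\<And>w. norm w \<le> r \<Longrightarrow> m * norm w ^ nat (zorder f z) \<le> norm (f (z + w))"
    "\<And>w. norm w \<le> r \<Longrightarrow> norm (f (z + w)) \<le> M * norm w ^ nat (zorder f z)"
proof -
  obtain r where r: "r > 0" "zor_poly f z holomorphic_on cball z r"
    "\<forall>w\<in>cball z r. f w = zor_poly f z w * (w - z) ^ nat (zorder f z) \<and> zor_poly f z w \<noteq> 0"
    using zorder_exist_zero[OF hol open_UNIV connected_UNIV, of z] nz by blast
  define g where "g = zor_poly f z"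
  have cont: "continuous_on (cball z r) (\<lambda>w. norm (g w))"
    using r(2) unfolding g_def by (intro continuous_intros holomorphic_on_imp_continuous_on)
  have ne: "cball z r \<noteq> {}" using r by auto
  obtain w1 where w1: "w1 \<in> cball z r" "\<forall>y\<in>cball z r. norm (g w1) \<le> norm (g y)"
    using continuous_attains_inf[OF compact_cball ne cont] by blast
  obtain w2 where w2: "w2 \<in> cball z r" "\<forall>y\<in>cball z r. norm (g y) \<le> norm (g w2)"
    using continuous_attains_sup[OF compact_cball ne cont] by blast
  have "z + w \<in> cball z r" if "norm w \<le> r" for w using that by (simp add: dist_norm)
  then have "norm (g w1) * norm w ^ nat (zorder f z) \<le> norm (f (z + w))"
    "norm (f (z + w)) \<le> norm (g w2) * norm w ^ nat (zorder f z)" if "norm w \<le> r" for w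
    using that r(3) w1(2) w2(2) by (auto simp: g_def norm_mult norm_power intro!: mult_right_mono)
  moreover have "norm (g w1) > 0" using r(3) w1(1) by (simp add: g_def)
  ultimately show ?thesis using that r(1) by blast
qed

lemma product_local_upper_bound:
  fixes f1 f2 :: "complex \<Rightarrow> complex"
  assumes r: "r > 0"
    and f1: "\<And>w. norm w \<le> r \<Longrightarrow> norm (f1 w) \<le> M1 * norm w ^ K1"
    and f2: "\<And>w. norm w \<le> r \<Longrightarrow> norm (f2 w) \<le> M2 * norm w ^ K2"
  shows "\<exists>C>0. \<forall>\<^sub>F h in nhds 0. norm (f1 (fst h) * f2 (snd h)) \<le> C * norm h ^ (K1 + K2)"
proof (intro exI conjI)
  have "0 \<le> M1 * r ^ K1" "0 \<le> M2 * r ^ K2"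
    using f1[of "of_real r"] f2[of "of_real r"] r by (auto intro: order_trans[OF norm_ge_zero])
  moreover have "r ^ K1 > 0" "r ^ K2 > 0" using r by simp_all
  ultimately have M: "M1 \<ge> 0" "M2 \<ge> 0" by (simp_all add: zero_le_mult_iff)
  then show "M1 * M2 + 1 > 0" by (simp add: add_nonneg_pos)
  have "\<forall>\<^sub>F h in nhds (0 :: complex \<times> complex). norm h \<le> r"
    using r eventually_nhds_metric_le[of "\<lambda>h. norm h \<le> r" 0] by (auto simp: dist_norm)
  then show "\<forall>\<^sub>F h in nhds 0. norm (f1 (fst h) * f2 (snd h)) \<le> (M1 * M2 + 1) * norm h ^ (K1 + K2)"
  proof (rule eventually_mono)
    fix h :: "complex \<times> complex" assume h: "norm h \<le> r"
    have fst: "norm (fst h) \<le> norm h" and snd: "norm (snd h) \<le> norm h"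
      using norm_fst_le[of "fst h" "snd h"] norm_snd_le[of "snd h" "fst h"] by simp_all
    have "norm (f1 (fst h) * f2 (snd h)) \<le> M1 * norm (fst h) ^ K1 * (M2 * norm (snd h) ^ K2)"
      unfolding norm_mult using f1 f2 fst snd h M by (intro mult_mono) auto
    also have "\<dots> \<le> M1 * norm h ^ K1 * (M2 * norm h ^ K2)"
      using fst snd M by (intro mult_mono mult_left_mono power_mono) auto
    also have "\<dots> \<le> (M1 * M2 + 1) * norm h ^ (K1 + K2)"
      by (simp add: power_add algebra_simps)
    finally show "norm (f1 (fst h) * f2 (snd h)) \<le> (M1 * M2 + 1) * norm h ^ (K1 + K2)" .
  qed
qed

text \<open>Testing the bound on the diagonal \<open>h = (t, t)\<close> with \<open>t \<rightarrow> 0\<close> bounds the exponent.\<close>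

lemma product_local_lower_bound:
  fixes f1 f2 :: "complex \<Rightarrow> complex"
  assumes r: "r > 0" and m: "m1 > 0" "m2 > 0"
    and f1: "\<And>t. 0 \<le> t \<Longrightarrow> t \<le> r \<Longrightarrow> m1 * t ^ K1 \<le> norm (f1 (of_real t))"
    and f2: "\<And>t. 0 \<le> t \<Longrightarrow> t \<le> r \<Longrightarrow> m2 * t ^ K2 \<le> norm (f2 (of_real t))"
    and C: "C > 0" and bound: "\<forall>\<^sub>F h in nhds 0. norm (f1 (fst h) * f2 (snd h)) \<le> C * norm h ^ k"
  shows "k \<le> K1 + K2"
proof (rule ccontr)
  assume kK: "\<not> k \<le> K1 + K2"
  obtain d where d: "d > 0" "\<And>h. dist h 0 \<le> d \<Longrightarrow> norm (f1 (fst h) * f2 (snd h)) \<le> C * norm h ^ k"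
    using bound unfolding eventually_nhds_metric_le by blast
  define t where "t = min (min (d / 2) r) (min 1 (m1 * m2 / (2 * C * 2 ^ k)))"
  have t: "t > 0" "t \<le> 1" "2 * t \<le> d" "t \<le> r" "t \<le> m1 * m2 / (2 * C * 2 ^ k)"
    using d r m C by (auto simp: t_def)
  define h where "h = (complex_of_real t, complex_of_real t)"
  have nh: "norm h \<le> 2 * t"
    using norm_Pair_le[of "complex_of_real t" "complex_of_real t"] t by (simp add: h_def)
  have "m1 * t ^ K1 * (m2 * t ^ K2) \<le> norm (f1 (of_real t)) * norm (f2 (of_real t))"
    using f1[of t] f2[of t] t m by (intro mult_mono) auto
  then have "m1 * m2 * t ^ (K1 + K2) \<le> norm (f1 (fst h) * f2 (snd h))"
    by (simp add: h_def norm_mult power_add algebra_simps)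
  also have "\<dots> \<le> C * norm h ^ k" using nh t by (intro d(2)) (simp add: dist_norm)
  also have "\<dots> \<le> C * (2 * t) ^ k" using nh C by (intro mult_left_mono power_mono) auto
  also have "\<dots> = C * 2 ^ k * t ^ k" by (simp add: power_mult_distrib)
  also have "\<dots> \<le> C * 2 ^ k * t ^ (K1 + K2 + 1)"
    using kK t C by (intro mult_left_mono power_decreasing) auto
  finally have "m1 * m2 \<le> C * 2 ^ k * t" using t by (simp add: algebra_simps)
  moreover have "C * 2 ^ k * t \<le> m1 * m2 / 2" using t(5) C by (simp add: field_simps)
  ultimately show False using mult_pos_pos[OF m] by linarith
qed

lemma vmult_product:
  fixes f1 f2 :: "complex \<Rightarrow> complex"
  assumes h1: "f1 holomorphic_on UNIV" and n1: "f1 a1 \<noteq> 0"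
    and h2: "f2 holomorphic_on UNIV" and n2: "f2 a2 \<noteq> 0"
  shows "vmult (\<lambda>v. f1 (fst v) * f2 (snd v)) p = enat (nat (zorder f1 (fst p)) + nat (zorder f2 (snd p)))"
proof -
  obtain r1 m1 M1 where R1: "r1 > 0" "m1 > 0"
    "\<And>w. norm w \<le> r1 \<Longrightarrow> m1 * norm w ^ nat (zorder f1 (fst p)) \<le> norm (f1 (fst p + w))"
    "\<And>w. norm w \<le> r1 \<Longrightarrow> norm (f1 (fst p + w)) \<le> M1 * norm w ^ nat (zorder f1 (fst p))"
    using zorder_local_bounds[OF h1 n1] by metis
  obtain r2 m2 M2 where R2: "r2 > 0" "m2 > 0"
    "\<And>w. norm w \<le> r2 \<Longrightarrow> m2 * norm w ^ nat (zorder f2 (snd p)) \<le> norm (f2 (snd p + w))"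
    "\<And>w. norm w \<le> r2 \<Longrightarrow> norm (f2 (snd p + w)) \<le> M2 * norm w ^ nat (zorder f2 (snd p))"
    using zorder_local_bounds[OF h2 n2] by metis
  define r where "r = min r1 r2"
  have r: "r > 0" "r \<le> r1" "r \<le> r2" using R1(1) R2(1) by (simp_all add: r_def)
  have up1: "norm (f1 (fst p + w)) \<le> M1 * norm w ^ nat (zorder f1 (fst p))"
    and up2: "norm (f2 (snd p + w)) \<le> M2 * norm w ^ nat (zorder f2 (snd p))" if "norm w \<le> r" for w
    using R1(4) R2(4) that r by simp_all
  have low1: "m1 * t ^ nat (zorder f1 (fst p)) \<le> norm (f1 (fst p + of_real t))"
    and low2: "m2 * t ^ nat (zorder f2 (snd p)) \<le> norm (f2 (snd p + of_real t))" if "0 \<le> t" "t \<le> r" for t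
    using R1(3)[of "of_real t"] R2(3)[of "of_real t"] that r by simp_all
  show ?thesis
  proof (rule vmult_eqI)
    show "\<exists>C>0. \<forall>\<^sub>F h in nhds 0. norm ((\<lambda>v. f1 (fst v) * f2 (snd v)) (p + h))
        \<le> C * norm h ^ (nat (zorder f1 (fst p)) + nat (zorder f2 (snd p)))"
      using product_local_upper_bound[OF r(1) up1 up2] by simp
    show "k \<le> nat (zorder f1 (fst p)) + nat (zorder f2 (snd p))"
      if "C > 0" "\<forall>\<^sub>F h in nhds 0. norm ((\<lambda>v. f1 (fst v) * f2 (snd v)) (p + h)) \<le> C * norm h ^ k" for k C
      using that by (intro product_local_lower_bound[OF r(1) R1(2) R2(2) low1 low2]) simp_all
  qed
qed

section \<open>The theta functions entering the curves\<close>

definition theta_zero_point :: "complex \<Rightarrow> complex" where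
  "theta_zero_point \<tau> = (1 + \<tau>) / 2"

lemma double_theta_zero_point: "2 * theta_zero_point \<tau> \<in> period_lattice 1 \<tau>"
proof -
  have "2 * theta_zero_point \<tau> = of_int 1 * of_real 1 + of_int 1 * \<tau>" by (simp add: theta_zero_point_def)
  then show ?thesis by (metis period_lattice_intI)
qed

lemma theta_at_zero_point: "theta 0 \<tau> (theta_zero_point \<tau>) = 0"
proof -
  define u where "u = - theta_zero_point \<tau>"
  have "theta 0 \<tau> (theta_zero_point \<tau>) = theta 0 \<tau> (u + \<tau> + 1)"
    by (simp add: u_def theta_zero_point_def field_simps)
  also have "\<dots> = exp (- pi * \<i> * \<tau> - 2 * pi * \<i> * u) * theta 0 \<tau> u"
    by (simp add: theta_add_1 theta_add_tau)
  also have "- pi * \<i> * \<tau> - 2 * pi * \<i> * u = of_real pi * \<i>"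
    by (simp add: u_def theta_zero_point_def field_simps)
  also have "theta 0 \<tau> u = theta 0 \<tau> (theta_zero_point \<tau>)"
    using theta_minus[of 0 \<tau> "theta_zero_point \<tau>"] by (simp add: u_def)
  finally show ?thesis by simp
qed

lemma zorder_theta:
  assumes tau: "Im \<tau> > 0"
  shows "zorder (theta 0 \<tau>) z = of_bool (z - theta_zero_point \<tau> \<in> period_lattice 1 \<tau>)"
proof -
  obtain w0 where "theta 0 \<tau> w0 \<noteq> 0" using theta_not_identically_zero[OF tau] by blast
  from quasiperiodic_zorder_eq[OF holomorphic_theta[OF tau] _ tau _ _ _ this, of 1 "- pi * \<i> * \<tau>"
      "2 * pi * \<i>" 1 "{theta_zero_point \<tau>}"]
  show ?thesis by (simp add: theta_add_1 theta_add_tau theta_at_zero_point)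
qed

definition theta_quarter_diff :: "complex \<Rightarrow> complex \<Rightarrow> complex" where
  "theta_quarter_diff \<tau> w = theta (3/4) \<tau> w - theta (1/4) \<tau> w"

lemma theta_quarter_diff_eq: "theta_quarter_diff \<tau> w = theta (1/4) \<tau> (- w) - theta (1/4) \<tau> w"
  using theta_char_add_1[of "- (1/4)" \<tau> w] theta_minus[of "1/4" \<tau> w]
  by (simp add: theta_quarter_diff_def)

text \<open>Its four zeros modulo \<open>4\<int> + \<tau>\<int>\<close> come from \<open>\<theta>[1/4](-w) = \<theta>[1/4](w)\<close> at the half periods.\<close>

lemma theta_quarter_diff_half_periods:
  assumes "s \<in> half_periods 4 \<tau>"
  shows "theta_quarter_diff \<tau> s = 0"
proof -
  define \<theta> where "\<theta> = theta (1/4) \<tau>"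
  have per: "\<theta> (w + 4) = \<theta> w" for w unfolding \<theta>_def using theta_quarter_add_4[of 1 \<tau> w] by simp
  have qp: "\<theta> (w + \<tau>) = exp (- pi * \<i> * \<tau> - 2 * pi * \<i> * w) * \<theta> w" for w
    unfolding \<theta>_def by (rule theta_add_tau)
  have "\<theta> 2 = \<theta> (-2)" using per[of "-2"] by simp
  moreover have "\<theta> (\<tau> / 2) = \<theta> (- (\<tau> / 2))" using qp[of "- (\<tau> / 2)"] by simp
  moreover have "\<theta> (\<tau> / 2 + 2) = \<theta> (- (\<tau> / 2 + 2))"
  proof -
    have "- pi * \<i> * \<tau> - 2 * pi * \<i> * (- (\<tau> / 2 + 2) + 4) = 2 * complex_of_real pi * \<i> * of_int (-2)"
      by (simp add: field_simps)
    then have "exp (- pi * \<i> * \<tau> - 2 * pi * \<i> * (- (\<tau> / 2 + 2) + 4)) = 1"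
      by (simp only: exp_two_pi_i_int)
    moreover have "\<tau> / 2 + 2 = (- (\<tau> / 2 + 2) + 4) + \<tau>" by simp
    ultimately have "\<theta> (\<tau> / 2 + 2) = \<theta> (- (\<tau> / 2 + 2) + 4)" using qp by (metis mult_1)
    then show ?thesis using per[of "- (\<tau> / 2 + 2)"] by simp
  qed
  ultimately show ?thesis
    using assms unfolding half_periods_eq by (auto simp: theta_quarter_diff_eq \<theta>_def)
qed

lemma zorder_theta_quarter_diff:
  assumes tau: "Im \<tau> > 0"
  shows "zorder (theta_quarter_diff \<tau>) w
       = of_bool (\<exists>s\<in>half_periods 4 \<tau>. w - s \<in> period_lattice 4 \<tau>)"
proof (rule quasiperiodic_zorder_eq[where \<alpha> = "- pi * \<i> * \<tau>" and c = "2 * pi * \<i>" and N = 4])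
  show "theta_quarter_diff \<tau> holomorphic_on UNIV"
    unfolding theta_quarter_diff_def[abs_def] using holomorphic_theta[OF tau] by (intro holomorphic_intros)
  show "theta_quarter_diff \<tau> (w + complex_of_real 4) = theta_quarter_diff \<tau> w" for w
    using theta_quarter_add_4[of 1 \<tau> w] theta_quarter_add_4[of 3 \<tau> w] by (simp add: theta_quarter_diff_def)
  show "theta_quarter_diff \<tau> (w + \<tau>) = exp (- pi * \<i> * \<tau> - 2 * pi * \<i> * w) * theta_quarter_diff \<tau> w" for w
    by (simp add: theta_quarter_diff_def theta_add_tau right_diff_distrib)
  show "theta_quarter_diff \<tau> (SOME w. theta_quarter_diff \<tau> w \<noteq> 0) \<noteq> 0"
    using someI_ex[OF theta_quarter_diff_not_identically_zero[OF tau]] by (simp add: theta_quarter_diff_def)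
  show "card (half_periods 4 \<tau>) = 4" using tau by (simp add: card_half_periods)
  show "s = s'" if "s \<in> half_periods 4 \<tau>" "s' \<in> half_periods 4 \<tau>" "s - s' \<in> period_lattice 4 \<tau>" for s s'
    using half_periods_incongruent[of 4 \<tau> s s'] tau that by simp
qed (use tau theta_quarter_diff_half_periods in auto)

definition theta_quarter_comb :: "complex \<Rightarrow> (nat \<Rightarrow> complex) \<Rightarrow> complex \<Rightarrow> complex" where
  "theta_quarter_comb \<tau> a w = (\<Sum>j<4. a j * theta (real j / 4) \<tau> w)"

lemma holomorphic_theta_quarter_comb: "Im \<tau> > 0 \<Longrightarrow> theta_quarter_comb \<tau> a holomorphic_on UNIV"
  unfolding theta_quarter_comb_def[abs_def] using holomorphic_theta by (intro holomorphic_intros) auto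

lemma theta_quarter_comb_add_4: "theta_quarter_comb \<tau> a (w + 4) = theta_quarter_comb \<tau> a w"
  unfolding theta_quarter_comb_def using theta_quarter_add_4 by simp

lemma theta_quarter_comb_add_tau:
  "theta_quarter_comb \<tau> a (w + \<tau>) = exp (- pi * \<i> * \<tau> - 2 * pi * \<i> * w) * theta_quarter_comb \<tau> a w"
  unfolding theta_quarter_comb_def theta_add_tau by (simp add: sum_distrib_left mult_ac)

section \<open>The curves on \<open>E \<times> F\<close>\<close>

lemma infsum_product:
  fixes f :: "'a \<Rightarrow> complex" and g :: "'b \<Rightarrow> complex"
  assumes f: "(\<lambda>x. norm (f x)) summable_on UNIV" and g: "(\<lambda>y. norm (g y)) summable_on UNIV"
  shows "(\<Sum>\<^sub>\<infinity>l\<in>UNIV. f (fst l) * g (snd l)) = (\<Sum>\<^sub>\<infinity>x. f x) * (\<Sum>\<^sub>\<infinity>y. g y)"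
proof -
  define h where "h = (\<lambda>l. f (fst l) * g (snd l))"
  have "(\<lambda>l. norm (h l)) summable_on Sigma UNIV (\<lambda>_. UNIV)"
  proof (rule Infinite_Sum.abs_summable_on_Sigma_iff[THEN iffD2], intro conjI ballI)
    show "(\<lambda>y. norm (h (x, y))) summable_on UNIV" for x
      unfolding h_def using summable_on_cmult_right[OF g, of "norm (f x)"] by (simp add: norm_mult)
    have "(\<lambda>x. norm (f x) * (\<Sum>\<^sub>\<infinity>y. norm (g y))) summable_on UNIV"
      using summable_on_cmult_left[OF f] by simp
    moreover have "(\<Sum>\<^sub>\<infinity>y. norm (h (x, y))) = norm (f x) * (\<Sum>\<^sub>\<infinity>y. norm (g y))" for x
      unfolding h_def by (simp add: norm_mult infsum_cmult_right')
    ultimately show "(\<lambda>x. norm (\<Sum>\<^sub>\<infinity>y\<in>UNIV. norm (h (x, y)))) summable_on UNIV"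
      by (simp add: infsum_nonneg)
  qed
  then have s: "h summable_on Sigma UNIV (\<lambda>_. UNIV)" by (rule abs_summable_summable)
  have "(\<Sum>\<^sub>\<infinity>x. \<Sum>\<^sub>\<infinity>y. h (x, y)) = infsum h (Sigma UNIV (\<lambda>_. UNIV))"
    by (rule infsum_Sigma_banach[OF s])
  moreover have "(\<Sum>\<^sub>\<infinity>x. \<Sum>\<^sub>\<infinity>y. h (x, y)) = (\<Sum>\<^sub>\<infinity>x. f x) * (\<Sum>\<^sub>\<infinity>y. g y)"
    unfolding h_def by (simp add: infsum_cmult_right' infsum_cmult_left')
  ultimately show ?thesis by (simp add: h_def)
qed

lemma theta_char_diag:
  assumes "Im \<tau>1 > 0" and "Im \<tau>2 > 0"
  shows "theta_char (0, c) (0, 0) v \<tau>1 \<tau>2 = theta 0 \<tau>1 (fst v) * theta c \<tau>2 (snd v)"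
proof -
  have "theta_char (0, c) (0, 0) v \<tau>1 \<tau>2
      = (\<Sum>\<^sub>\<infinity>l\<in>UNIV. theta_term 0 \<tau>1 (fst v) (fst l) * theta_term c \<tau>2 (snd v) (snd l))"
    unfolding theta_char_def theta_term_def Let_def exp_add[symmetric]
    by (intro infsum_cong arg_cong[where f = exp]) (simp add: algebra_simps)
  also have "\<dots> = theta 0 \<tau>1 (fst v) * theta c \<tau>2 (snd v)"
    unfolding theta_def using assms by (intro infsum_product theta_term_abs_summable)
  finally show ?thesis .
qed

lemma theta_section_eq:
  assumes "Im \<tau>1 > 0" and "Im \<tau>2 > 0"
  shows "theta_section \<tau>1 \<tau>2 a v = theta 0 \<tau>1 (fst v) * theta_quarter_comb \<tau>2 a (snd v)"
  unfolding theta_section_def theta_quarter_comb_def theta_char_diag[OF assms]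
  by (simp add: sum_distrib_left mult_ac)

definition theta_mult :: "complex \<Rightarrow> complex \<Rightarrow> nat" where
  "theta_mult \<tau> z = of_bool (z - theta_zero_point \<tau> \<in> period_lattice 1 \<tau>)"

definition quarter_diff_mult :: "complex \<Rightarrow> complex \<Rightarrow> nat" where
  "quarter_diff_mult \<tau> w = of_bool (\<exists>s\<in>half_periods 4 \<tau>. w - s \<in> period_lattice 4 \<tau>)"

lemma C_EF_eq:
  assumes t1: "Im \<tau>1 > 0" and t2: "Im \<tau>2 > 0"
  shows "C_EF \<tau>1 \<tau>2 p = enat (theta_mult \<tau>1 (fst p) + quarter_diff_mult \<tau>2 (snd p))"
proof -
  obtain z0 where z0: "theta 0 \<tau>1 z0 \<noteq> 0" using theta_not_identically_zero[OF t1] by blast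
  obtain w0 where w0: "theta_quarter_diff \<tau>2 w0 \<noteq> 0"
    using theta_quarter_diff_not_identically_zero[OF t2] unfolding theta_quarter_diff_def by blast
  have "C_EF \<tau>1 \<tau>2 p = vmult (\<lambda>v. theta 0 \<tau>1 (fst v) * theta_quarter_diff \<tau>2 (snd v)) p"
    unfolding C_EF_def theta_char_diag[OF t1 t2] theta_quarter_diff_def by (simp add: right_diff_distrib)
  also have "\<dots> = enat (nat (zorder (theta 0 \<tau>1) (fst p)) + nat (zorder (theta_quarter_diff \<tau>2) (snd p)))"
  proof (rule vmult_product)
    show "theta 0 \<tau>1 holomorphic_on UNIV" by (rule holomorphic_theta[OF t1])
    show "theta_quarter_diff \<tau>2 holomorphic_on UNIV"
      unfolding theta_quarter_diff_def[abs_def] using holomorphic_theta[OF t2] by (intro holomorphic_intros)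
  qed (fact z0 w0)+
  finally show ?thesis
    by (simp add: zorder_theta[OF t1] zorder_theta_quarter_diff[OF t2] theta_mult_def quarter_diff_mult_def)
qed

lemma vmult_theta_section:
  assumes t1: "Im \<tau>1 > 0" and t2: "Im \<tau>2 > 0" and nz: "theta_quarter_comb \<tau>2 a w0 \<noteq> 0"
  shows "vmult (\<lambda>v. theta_section \<tau>1 \<tau>2 a (v + x)) p
       = enat (theta_mult \<tau>1 (fst p + fst x) + nat (zorder (theta_quarter_comb \<tau>2 a) (snd p + snd x)))"
proof -
  obtain z0 where z0: "theta 0 \<tau>1 z0 \<noteq> 0" using theta_not_identically_zero[OF t1] by blast
  have "vmult (\<lambda>v. theta_section \<tau>1 \<tau>2 a (v + x)) p
      = vmult (\<lambda>v. theta 0 \<tau>1 (fst v + fst x) * theta_quarter_comb \<tau>2 a (snd v + snd x)) p"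
    by (simp add: theta_section_eq[OF t1 t2])
  also have "\<dots> = enat (nat (zorder (\<lambda>z. theta 0 \<tau>1 (z + fst x)) (fst p))
                     + nat (zorder (\<lambda>z. theta_quarter_comb \<tau>2 a (z + snd x)) (snd p)))"
  proof (rule vmult_product)
    show "theta 0 \<tau>1 ((z0 - fst x) + fst x) \<noteq> 0" "theta_quarter_comb \<tau>2 a ((w0 - snd x) + snd x) \<noteq> 0"
      using z0 nz by simp_all
  qed (intro holomorphic_on_translate holomorphic_theta holomorphic_theta_quarter_comb t1 t2)+
  finally show ?thesis by (simp add: zorder_translate zorder_theta[OF t1] theta_mult_def)
qed

lemma vmult_theta_section_degenerate:
  assumes "Im \<tau>1 > 0" and "Im \<tau>2 > 0" and "\<And>w. theta_quarter_comb \<tau>2 a w = 0"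
  shows "vmult (\<lambda>v. theta_section \<tau>1 \<tau>2 a (v + x)) p = \<infinity>"
  using assms by (simp add: theta_section_eq vmult_zero_fun)

lemma theta_mult_minus:
  assumes "t \<in> half_periods 1 \<tau>"
  shows "theta_mult \<tau> (- z - t) = theta_mult \<tau> (z - t)"
proof -
  have l: "2 * t + 2 * theta_zero_point \<tau> \<in> period_lattice 1 \<tau>"
    using period_lattice_add[OF double_half_period_in_lattice[OF assms] double_theta_zero_point] .
  have "- z - t - theta_zero_point \<tau> \<in> period_lattice 1 \<tau>
      \<longleftrightarrow> - z - t - theta_zero_point \<tau> + (2 * t + 2 * theta_zero_point \<tau>) \<in> period_lattice 1 \<tau>"
    using period_lattice_add_iff[OF l] by blast
  also have "- z - t - theta_zero_point \<tau> + (2 * t + 2 * theta_zero_point \<tau>) = - (z - t - theta_zero_point \<tau>)"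
    by (simp add: algebra_simps)
  finally have "- z - t - theta_zero_point \<tau> \<in> period_lattice 1 \<tau>
      \<longleftrightarrow> z - t - theta_zero_point \<tau> \<in> period_lattice 1 \<tau>"
    by (simp only: period_lattice_uminus_iff)
  then show ?thesis unfolding theta_mult_def by simp
qed

lemma quarter_diff_mult_minus: "quarter_diff_mult \<tau> (- w) = quarter_diff_mult \<tau> w"
proof -
  have "- w - s \<in> period_lattice 4 \<tau> \<longleftrightarrow> w - s \<in> period_lattice 4 \<tau>" if "s \<in> half_periods 4 \<tau>" for s
  proof -
    have "- w - s = - (w + s)" by simp
    then show ?thesis by (simp only: period_lattice_uminus_iff half_period_add_iff_diff[OF that])
  qed
  then show ?thesis unfolding quarter_diff_mult_def by auto
qed

lemma quarter_diff_mult_half_period: "s \<in> half_periods 4 \<tau> \<Longrightarrow> quarter_diff_mult \<tau> s = 1"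
  unfolding quarter_diff_mult_def by (auto intro: bexI[of _ s])

lemma theta_mult_on_half_periods:
  assumes "Im \<tau> > 0" and "t \<in> half_periods 1 \<tau>"
  obtains e0 where "e0 \<in> half_periods 1 \<tau>" "\<And>e. e \<in> half_periods 1 \<tau> \<Longrightarrow> theta_mult \<tau> (e - t) = of_bool (e = e0)"
proof -
  have "2 * (t + theta_zero_point \<tau>) \<in> period_lattice 1 \<tau>"
    using period_lattice_add[OF double_half_period_in_lattice[OF assms(2)] double_theta_zero_point]
    by (simp add: algebra_simps)
  from unique_congruent_half_period[OF assms(1) this] that show ?thesis
    unfolding theta_mult_def by (auto simp: algebra_simps)
qed

text \<open>On \<open>A \<times> B\<close> the parity of \<open>[a = a0] + D b\<close> is odd at \<open>3 k + (4 - k)\<close> points, \<open>k\<close> the number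
  of \<open>b\<close> with \<open>D b\<close> odd; this equals 12 only for \<open>k = 4\<close>.\<close>

lemma card_odd_indicator_plus:
  fixes A B :: "'a set" and D :: "'a \<Rightarrow> nat"
  assumes A: "finite A" "card A = 4" "a0 \<in> A" and B: "finite B" "card B = 4"
  shows "card {p \<in> A \<times> B. odd (of_bool (fst p = a0) + D (snd p))} = 12 \<longleftrightarrow> (\<forall>b\<in>B. odd (D b))"
proof -
  define Od where "Od = {b\<in>B. odd (D b)}"
  have Od: "finite Od" "Od \<subseteq> B" "card Od \<le> 4"
    using B card_mono[OF B(1), of Od] by (auto simp: Od_def)
  have "{p \<in> A \<times> B. odd (of_bool (fst p = a0) + D (snd p))} = (A - {a0}) \<times> Od \<union> {a0} \<times> (B - Od)"
    using A(3) by (auto simp: Od_def)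
  moreover have "card ((A - {a0}) \<times> Od \<union> {a0} \<times> (B - Od)) = 3 * card Od + (4 - card Od)"
    using A B Od by (subst card_Un_disjoint) (auto simp: card_cartesian_product card_Diff_subset)
  moreover have "card Od = 4 \<longleftrightarrow> Od = B" using card_subset_eq[OF B(1) Od(2)] B(2) by auto
  ultimately show ?thesis using Od(3) by (auto simp: Od_def)
qed

definition translated_C_EF :: "complex \<Rightarrow> complex \<Rightarrow> complex \<Rightarrow> complex \<times> complex \<Rightarrow> enat" where
  "translated_C_EF \<tau>1 \<tau>2 t = (\<lambda>p. C_EF \<tau>1 \<tau>2 (p - (t, 0)))"

lemma translated_C_EF_eq:
  assumes "Im \<tau>1 > 0" and "Im \<tau>2 > 0"
  shows "translated_C_EF \<tau>1 \<tau>2 t p = enat (theta_mult \<tau>1 (fst p - t) + quarter_diff_mult \<tau>2 (snd p))"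
  unfolding translated_C_EF_def C_EF_eq[OF assms] by simp

lemma translated_C_EF_in_sym_curves:
  assumes t1: "Im \<tau>1 > 0" and t2: "Im \<tau>2 > 0" and t: "t \<in> half_periods 1 \<tau>1"
  shows "translated_C_EF \<tau>1 \<tau>2 t \<in> sym_curves \<tau>1 \<tau>2"
proof -
  define a :: "nat \<Rightarrow> complex" where "a = (\<lambda>j. if j = 3 then 1 else if j = 1 then -1 else 0)"
  have sec: "(\<lambda>v. theta_char (0, 3/4) (0, 0) v \<tau>1 \<tau>2 - theta_char (0, 1/4) (0, 0) v \<tau>1 \<tau>2)
      = theta_section \<tau>1 \<tau>2 a"
    by (simp add: theta_section_def a_def fun_eq_iff eval_nat_numeral)
  have "translated_C_EF \<tau>1 \<tau>2 t = vmult (\<lambda>v. theta_section \<tau>1 \<tau>2 a (v + - (t, 0)))"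
    unfolding translated_C_EF_def C_EF_def sec by (simp add: fun_eq_iff vmult_translate)
  moreover have "translated_C_EF \<tau>1 \<tau>2 t (- p) = translated_C_EF \<tau>1 \<tau>2 t p" for p
    unfolding translated_C_EF_eq[OF t1 t2] using theta_mult_minus[OF t, of "fst p"] quarter_diff_mult_minus
    by simp
  moreover have "\<exists>j<4. a j \<noteq> 0" by (intro exI[of _ 3]) (simp add: a_def)
  ultimately show ?thesis unfolding sym_curves_def by blast
qed

lemma two_torsion_eq: "two_torsion \<tau>1 \<tau>2 = half_periods 1 \<tau>1 \<times> half_periods 4 \<tau>2"
  unfolding two_torsion_def half_periods_def by auto

lemma two_torsion_E_eq: "two_torsion_E \<tau>1 = (\<lambda>e. (e, 0)) ` half_periods 1 \<tau>1"
  unfolding two_torsion_E_def half_periods_def by auto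

lemma odd_mult_enat [simp]: "odd_mult (enat k) \<longleftrightarrow> odd k"
  by (simp add: odd_mult_def)

lemma odd_mult_infinity [simp]: "\<not> odd_mult \<infinity>"
  by (simp add: odd_mult_def)

lemma card_odd_points_eq:
  assumes t1: "Im \<tau>1 > 0" and t2: "Im \<tau>2 > 0" and t: "t \<in> half_periods 1 \<tau>1"
    and m: "\<And>p. m p = enat (theta_mult \<tau>1 (fst p - t) + D (snd p))"
  shows "card {p \<in> two_torsion \<tau>1 \<tau>2. odd_mult (m p)} = 12 \<longleftrightarrow> (\<forall>s\<in>half_periods 4 \<tau>2. odd (D s))"
proof -
  obtain e0 where e0: "e0 \<in> half_periods 1 \<tau>1"
    "\<And>e. e \<in> half_periods 1 \<tau>1 \<Longrightarrow> theta_mult \<tau>1 (e - t) = of_bool (e = e0)"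
    using theta_mult_on_half_periods[OF t1 t] by blast
  have "{p \<in> two_torsion \<tau>1 \<tau>2. odd_mult (m p)}
      = {p \<in> half_periods 1 \<tau>1 \<times> half_periods 4 \<tau>2. odd (of_bool (fst p = e0) + D (snd p))}"
    unfolding two_torsion_eq m using e0(2) by auto
  then show ?thesis
    using card_odd_indicator_plus[OF _ _ e0(1)] card_half_periods[of 1 \<tau>1] card_half_periods[of 4 \<tau>2] t1 t2
    by simp
qed

lemma card_odd_translated_C_EF:
  assumes "Im \<tau>1 > 0" and "Im \<tau>2 > 0" and "t \<in> half_periods 1 \<tau>1"
  shows "card {p \<in> two_torsion \<tau>1 \<tau>2. odd_mult (translated_C_EF \<tau>1 \<tau>2 t p)} = 12"
  using card_odd_points_eq[OF assms translated_C_EF_eq[OF assms(1,2)]] quarter_diff_mult_half_period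
  by simp

lemma inj_on_translated_C_EF:
  assumes t1: "Im \<tau>1 > 0" and t2: "Im \<tau>2 > 0"
  shows "inj_on (translated_C_EF \<tau>1 \<tau>2) (half_periods 1 \<tau>1)"
proof (rule inj_onI)
  fix t t' assume t: "t \<in> half_periods 1 \<tau>1" "t' \<in> half_periods 1 \<tau>1"
    and eq: "translated_C_EF \<tau>1 \<tau>2 t = translated_C_EF \<tau>1 \<tau>2 t'"
  define p where "p = (t + theta_zero_point \<tau>1, 0 :: complex)"
  have "translated_C_EF \<tau>1 \<tau>2 t p = translated_C_EF \<tau>1 \<tau>2 t' p" using eq by simp
  then have "t - t' \<in> period_lattice 1 \<tau>1"
    by (simp add: translated_C_EF_eq[OF t1 t2] p_def theta_mult_def of_bool_def algebra_simps split: if_splits)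
  then show "t = t'" using half_periods_incongruent[of 1 \<tau>1 t t'] t t1 by simp
qed

section \<open>Symmetric curves through twelve odd two-torsion points\<close>

lemma exists_theta_mult_zero_pair:
  assumes "Im \<tau> > 0"
  obtains u where "theta_mult \<tau> (u + x) = 0" "theta_mult \<tau> (- u + x) = 0"
proof -
  define e0 where "e0 = theta_zero_point \<tau> - x"
  define K where "K = 2 * x - 2 * theta_zero_point \<tau>"
  have notin: "of_real (1/4) * \<tau> \<notin> period_lattice 1 \<tau>" "of_real (1/2) * \<tau> \<notin> period_lattice 1 \<tau>"
    using frac_mult_tau_notin_period_lattice[OF assms] quarter_notin_Ints half_notin_Ints by blast+
  have mult_eq: "theta_mult \<tau> (e0 + q + x) = of_bool (q \<in> period_lattice 1 \<tau>)"
    "theta_mult \<tau> (- (e0 + q) + x) = of_bool (K - q \<in> period_lattice 1 \<tau>)" for q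
    by (simp_all add: theta_mult_def e0_def K_def algebra_simps)
  consider "K - of_real (1/4) * \<tau> \<notin> period_lattice 1 \<tau>" | "K - of_real (1/2) * \<tau> \<notin> period_lattice 1 \<tau>"
    using period_lattice_diff[of "K - of_real (1/4) * \<tau>" 1 \<tau> "K - of_real (1/2) * \<tau>"] notin(1)
    by (force simp: algebra_simps)
  then show ?thesis
    by cases (use that[of "e0 + of_real (1/4) * \<tau>"] that[of "e0 + of_real (1/2) * \<tau>"] notin mult_eq
        in \<open>simp_all add: add.assoc\<close>)
qed

text \<open>A symmetric divisor of the form \<open>[z + x \<equiv> (1 + \<tau>)/2] + D(w)\<close> forces \<open>x\<close> to be a
  two-torsion point: first symmetry at a point where both \<open>[\<dots>]\<close> vanish transfers a zero of \<open>D\<close>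
  to its negative, then symmetry on the first factor alone makes the zero set of \<open>[\<dots>]\<close>
  symmetric.\<close>

lemma symmetric_theta_mult_shift:
  fixes D :: "complex \<Rightarrow> nat"
  assumes tau: "Im \<tau> > 0"
    and sym: "\<And>e w. theta_mult \<tau> (- e + x) + D (- w) = theta_mult \<tau> (e + x) + D w"
    and D0: "D w1 = 0"
  shows "2 * x \<in> period_lattice 1 \<tau>"
proof -
  obtain u where "theta_mult \<tau> (u + x) = 0" "theta_mult \<tau> (- u + x) = 0"
    using exists_theta_mult_zero_pair[OF tau] by blast
  then have "D (- w1) = 0" using sym[of u w1] D0 by simp
  then have "theta_mult \<tau> (- e + x) = theta_mult \<tau> (e + x)" for e using sym[of e w1] D0 by simp
  from this[of "theta_zero_point \<tau> - x"]
  have "2 * x - 2 * theta_zero_point \<tau> \<in> period_lattice 1 \<tau>"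
    by (simp add: theta_mult_def algebra_simps of_bool_def split: if_splits)
  from period_lattice_add[OF this double_theta_zero_point] show ?thesis by simp
qed

lemma zorder_theta_quarter_comb_shift:
  assumes tau: "Im \<tau> > 0" and nz: "theta_quarter_comb \<tau> a w0 \<noteq> 0"
    and zeros: "\<And>s. s \<in> half_periods 4 \<tau> \<Longrightarrow> theta_quarter_comb \<tau> a (s + y) = 0"
  shows "nat (zorder (theta_quarter_comb \<tau> a) (w + y)) = quarter_diff_mult \<tau> w"
proof -
  define g where "g = (\<lambda>w. theta_quarter_comb \<tau> a (w + y))"
  have "zorder g w = of_bool (\<exists>s\<in>half_periods 4 \<tau>. w - s \<in> period_lattice 4 \<tau>)"
  proof (rule quasiperiodic_zorder_eq[where \<alpha> = "- pi * \<i> * \<tau> - 2 * pi * \<i> * y" and c = "2 * pi * \<i>" and N = 4])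
    show "g holomorphic_on UNIV"
      unfolding g_def by (intro holomorphic_on_translate holomorphic_theta_quarter_comb tau)
    show "g (w + complex_of_real 4) = g w" for w
      using theta_quarter_comb_add_4[of \<tau> a "w + y"] by (simp add: g_def add_ac)
    show "g (w + \<tau>) = exp (- pi * \<i> * \<tau> - 2 * pi * \<i> * y - 2 * pi * \<i> * w) * g w" for w
      using theta_quarter_comb_add_tau[of \<tau> a "w + y"] by (simp add: g_def algebra_simps)
    show "g (w0 - y) \<noteq> 0" using nz by (simp add: g_def)
    show "card (half_periods 4 \<tau>) = 4" using tau by (simp add: card_half_periods)
    show "s = s'" if "s \<in> half_periods 4 \<tau>" "s' \<in> half_periods 4 \<tau>" "s - s' \<in> period_lattice 4 \<tau>" for s s'
      using half_periods_incongruent[of 4 \<tau> s s'] tau that by simp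
  qed (use tau zeros in \<open>auto simp: g_def\<close>)
  then show ?thesis by (simp add: g_def zorder_translate quarter_diff_mult_def)
qed

lemma sym_curve_12_odd_points_imp_translate:
  assumes t1: "Im \<tau>1 > 0" and t2: "Im \<tau>2 > 0"
    and m: "m \<in> sym_curves \<tau>1 \<tau>2"
    and c12: "card {p \<in> two_torsion \<tau>1 \<tau>2. odd_mult (m p)} = 12"
  shows "\<exists>t\<in>half_periods 1 \<tau>1. m = translated_C_EF \<tau>1 \<tau>2 t"
proof -
  obtain a x where m_def: "m = vmult (\<lambda>v. theta_section \<tau>1 \<tau>2 a (v + x))" and sym: "\<And>p. m (- p) = m p"
    using m unfolding sym_curves_def by blast
  have "\<exists>w0. theta_quarter_comb \<tau>2 a w0 \<noteq> 0"
  proof (rule ccontr)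
    assume "\<nexists>w0. theta_quarter_comb \<tau>2 a w0 \<noteq> 0"
    then have "{p \<in> two_torsion \<tau>1 \<tau>2. odd_mult (m p)} = {}"
      unfolding m_def using vmult_theta_section_degenerate[OF t1 t2] by auto
    then show False using c12 by (metis card.empty zero_neq_numeral)
  qed
  then obtain w0 where w0: "theta_quarter_comb \<tau>2 a w0 \<noteq> 0" by blast
  define D where "D = (\<lambda>w. nat (zorder (theta_quarter_comb \<tau>2 a) (w + snd x)))"
  have m_eq: "m p = enat (theta_mult \<tau>1 (fst p + fst x) + D (snd p))" for p
    unfolding m_def D_def by (rule vmult_theta_section[OF t1 t2 w0])
  have "D (w0 - snd x) = 0"
    using zorder_entire_pos_iff[OF holomorphic_theta_quarter_comb[OF t2] w0, of w0] w0 by (simp add: D_def)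
  moreover have "theta_mult \<tau>1 (- e + fst x) + D (- w) = theta_mult \<tau>1 (e + fst x) + D w" for e w
    using sym[of "(e, w)"] by (simp add: m_eq)
  ultimately have "2 * fst x \<in> period_lattice 1 \<tau>1"
    by (rule symmetric_theta_mult_shift[OF t1, rotated])
  then have "2 * (- fst x) \<in> period_lattice 1 \<tau>1" by simp
  then obtain t where t: "t \<in> half_periods 1 \<tau>1" "- fst x - t \<in> period_lattice 1 \<tau>1"
    using exists_congruent_half_period by blast
  have "theta_mult \<tau>1 (e + fst x) = theta_mult \<tau>1 (e - t)" for e
    using period_lattice_add_iff[OF t(2), of "e + fst x - theta_zero_point \<tau>1"]
    by (simp add: theta_mult_def algebra_simps)
  then have m_t: "m p = enat (theta_mult \<tau>1 (fst p - t) + D (snd p))" for p by (simp add: m_eq)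
  then have "\<forall>s\<in>half_periods 4 \<tau>2. odd (D s)" using card_odd_points_eq[OF t1 t2 t(1)] c12 by blast
  then have "theta_quarter_comb \<tau>2 a (s + snd x) = 0" if "s \<in> half_periods 4 \<tau>2" for s
    using that zorder_entire_pos_iff[OF holomorphic_theta_quarter_comb[OF t2] w0, of "s + snd x"]
    by (fastforce simp: D_def)
  then have "D = quarter_diff_mult \<tau>2"
    unfolding D_def by (intro ext zorder_theta_quarter_comb_shift[OF t2 w0])
  then have "m = translated_C_EF \<tau>1 \<tau>2 t" by (simp add: fun_eq_iff m_t translated_C_EF_eq[OF t1 t2])
  then show ?thesis using t(1) by blast
qed

theorem lemma3p6:
  fixes tau1 tau2 :: complex
  assumes "Im tau1 > 0" and "Im tau2 > 0"
  shows "card {m \<in> sym_curves tau1 tau2.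
                card {p \<in> two_torsion tau1 tau2. odd_mult (m p)} = 12} = 4
       \<and> (\<forall>m \<in> sym_curves tau1 tau2.
             card {p \<in> two_torsion tau1 tau2. odd_mult (m p)} = 12 \<longrightarrow>
             (\<exists>t \<in> two_torsion_E tau1. m = (\<lambda>p. C_EF tau1 tau2 (p - t))))"
proof
  have curves: "{m \<in> sym_curves tau1 tau2. card {p \<in> two_torsion tau1 tau2. odd_mult (m p)} = 12}
      = translated_C_EF tau1 tau2 ` half_periods 1 tau1"
    using sym_curve_12_odd_points_imp_translate[OF assms] translated_C_EF_in_sym_curves[OF assms]
      card_odd_translated_C_EF[OF assms] by blast
  show "card {m \<in> sym_curves tau1 tau2. card {p \<in> two_torsion tau1 tau2. odd_mult (m p)} = 12} = 4"
    unfolding curves card_image[OF inj_on_translated_C_EF[OF assms]]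
    using card_half_periods[of 1 tau1] assms by simp
  show "\<forall>m \<in> sym_curves tau1 tau2.
             card {p \<in> two_torsion tau1 tau2. odd_mult (m p)} = 12 \<longrightarrow>
             (\<exists>t \<in> two_torsion_E tau1. m = (\<lambda>p. C_EF tau1 tau2 (p - t)))"
    using curves unfolding two_torsion_E_eq translated_C_EF_def by blast
qed

end
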